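(* Let $\mu>0$, $\sigma>0$, $0\le \beta<\mu<\alpha$ and $0<v_0<x_0<u_0$. For $\epsilon>0$ let $\{X^\epsilon_t\}_{t\ge0}$ be the solution of the SDE $$dX^\epsilon_t=\mu X^\epsilon_t\,dt+\sqrt{\epsilon}\,\sigma\,dW_t,\qquad X^\epsilon_0=x_0,$$ where $\{W_t\}$ is a standard Brownian motion. Let $V(t)=v_0e^{\beta t}$ and $U(t)=u_0e^{\alpha t}$, and fix $T>0$. (i) Let $t^o_V$ be the unique positive solution of $$\phi_V(t):=\Big(1-\frac{\beta}{\mu}\Big)e^{(\mu+\beta)t}+\frac{\beta}{\mu}e^{(\beta-\mu)t}=\frac{x_0}{v_0}.$$ Then $$\lim_{\epsilon\to0}\epsilon\log\mathbb{P}\Big(\min_{t\in[0,T]}\big(X^\epsilon_t-V(t)\big)\le 0\Big)=-I_V(T),\qquad I_V(T)=\frac{\mu}{\sigma^2}\,\frac{\big(v_0e^{\beta(T\wedge t^o_V)}-x_0e^{\mu(T\wedge t^o_V)}\big)^2}{e^{2\mu(T\wedge t^o_V)}-1}.$$ (ii) Let $t^o_U$ be the unique positive solution of $$\phi_U(t):=\frac{\alpha}{\mu}e^{(\alpha-\mu)t}-\Big(\frac{\alpha}{\mu}-1\Big)e^{(\mu+\alpha)t}=\frac{x_0}{u_0}.$$ Then $$\lim_{\epsilon\to0}\epsilon\log\mathbb{P}\Big(\max_{t\in[0,T]}\big(X^\epsilon_t-U(t)\big)\ge 0\Big)=-I_U(T),\qquad I_U(T)=\frac{\mu}{\sigma^2}\,\frac{\big(u_0e^{\alpha(T\wedge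 t^o_U)}-x_0e^{\mu(T\wedge t^o_U)}\big)^2}{e^{2\mu(T\wedge t^o_U)}-1}.$$
   Context: $a\wedge b=\min(a,b)$. The solutions $t^o_V$, $t^o_U$ of the displayed equations are asserted to exist and be unique as part of the statement. *)

theory Defs
  imports "HOL-Probability.Probability"
begin

definition std_brownian_motion :: "'a measure \<Rightarrow> (real \<Rightarrow> 'a \<Rightarrow> real) \<Rightarrow> bool" where
  "std_brownian_motion M W \<longleftrightarrow>
     prob_space M \<and>
     (\<forall>t. W t \<in> borel_measurable M) \<and>
     (\<forall>\<omega>\<in>space M. W 0 \<omega> = 0 \<and> continuous_on {0..} (\<lambda>t. W t \<omega>)) \<and>
     (\<forall>s t. 0 \<le> s \<and> s < t \<longrightarrow>
        distributed M lborel (\<lambda>\<omega>. W t \<omega> - W s \<omega>) (normal_density 0 (sqrt (t - s)))) \<and>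
     (\<forall>(ts::nat \<Rightarrow> real) n. 0 \<le> ts 0 \<and> (\<forall>i<n. ts i < ts (Suc i)) \<longrightarrow>
        prob_space.indep_vars M (\<lambda>_. borel) (\<lambda>i \<omega>. W (ts (Suc i)) \<omega> - W (ts i) \<omega>) {..<n})"

text \<open>X is a (pathwise) solution of dX = mu X dt + sqrt eps sigma dW, X 0 = x0.
  Since the diffusion coefficient is constant, the SDE in integral form involves
  only an ordinary (pathwise) time integral.\<close>
definition solves_linear_sde ::
  "'a measure \<Rightarrow> (real \<Rightarrow> 'a \<Rightarrow> real) \<Rightarrow> real \<Rightarrow> real \<Rightarrow> real \<Rightarrow> real \<Rightarrow> (real \<Rightarrow> 'a \<Rightarrow> real) \<Rightarrow> bool" where
  "solves_linear_sde M W \<mu> \<sigma> \<epsilon> x0 X \<longleftrightarrow>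
     (\<forall>t. X t \<in> borel_measurable M) \<and>
     (\<forall>\<omega>\<in>space M. continuous_on {0..} (\<lambda>t. X t \<omega>) \<and>
        (\<forall>t\<ge>0. X t \<omega> = x0 + integral {0..t} (\<lambda>s. \<mu> * X s \<omega>) + sqrt \<epsilon> * \<sigma> * W t \<omega>))"

definition phi_V :: "real \<Rightarrow> real \<Rightarrow> real \<Rightarrow> real" where
  "phi_V \<mu> \<beta> t = (1 - \<beta>/\<mu>) * exp ((\<mu> + \<beta>) * t) + (\<beta>/\<mu>) * exp ((\<beta> - \<mu>) * t)"

definition phi_U :: "real \<Rightarrow> real \<Rightarrow> real \<Rightarrow> real" where
  "phi_U \<mu> \<alpha> t = (\<alpha>/\<mu>) * exp ((\<alpha> - \<mu>) * t) - (\<alpha>/\<mu> - 1) * exp ((\<mu> + \<alpha>) * t)"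

definition rate_fn :: "real \<Rightarrow> real \<Rightarrow> real \<Rightarrow> real \<Rightarrow> real \<Rightarrow> real \<Rightarrow> real" where
  "rate_fn \<mu> \<sigma> x0 c \<gamma> s =
     \<mu> / \<sigma>\<^sup>2 * (c * exp (\<gamma> * s) - x0 * exp (\<mu> * s))\<^sup>2 / (exp (2 * \<mu> * s) - 1)"

end

theory Submission
  imports Defs
begin

text \<open>Variation of constants gives \<open>e\<^sup>-\<^sup>\<mu>\<^sup>t X\<^sub>t = x\<^sub>0 + \<surd>\<epsilon> \<sigma> Z\<^sub>t\<close> with
  \<open>Z\<^sub>t = \<integral>\<^sub>0\<^sup>t e\<^sup>-\<^sup>\<mu>\<^sup>r dW\<^sub>r\<close>, a centred Gaussian process of variance
  \<open>(1 - e\<^sup>-\<^sup>2\<^sup>\<mu>\<^sup>t) / (2\<mu>)\<close>. So \<open>X\<close> meets a barrier \<open>b\<close> at time \<open>t\<close> iff \<open>Z\<^sub>t\<close> drops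
  below \<open>-(x\<^sub>0 - e\<^sup>-\<^sup>\<mu>\<^sup>t b(t)) / (\<surd>\<epsilon> \<sigma>)\<close>, which costs \<open>exp (- rate t / \<epsilon>)\<close> to leading order.
  Upper bound: on a fine grid, a Levy-Ottaviani maximal inequality controls the oscillation of
  \<open>W\<close> inside the cells and a Chernoff bound the discretised \<open>Z\<close> at the grid points. Lower
  bound: forcing the independent increments of \<open>W\<close> up to the minimiser \<open>L\<close> to follow the
  optimal profile \<open>\<propto> e\<^sup>-\<^sup>\<mu>\<^sup>r\<close> costs about \<open>exp (- rate L / \<epsilon>)\<close>. Hence
  \<open>\<epsilon> log P \<longrightarrow> - min {rate t | 0 < t \<le> T}\<close>. For an exponential barrier \<open>rate\<close> is \<open>rate_fn\<close>,
  which decreases up to \<open>t\<^sup>o\<close> and increases afterwards, so the minimum sits at \<open>min T t\<^sup>o\<close>.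
  The upper barrier \<open>U\<close> becomes a lower one under \<open>W \<mapsto> -W\<close>.\<close>

lemma grid_less:
  fixes g :: "nat \<Rightarrow> real"
  assumes "\<And>i. i < n \<Longrightarrow> g i < g (Suc i)"
  shows "i < j \<Longrightarrow> j \<le> n \<Longrightarrow> g i < g j"
proof (induction j)
  case (Suc j)
  then have "g j < g (Suc j)" using assms by simp
  moreover have "i < j \<Longrightarrow> g i < g j" using Suc by simp
  ultimately show ?case using Suc.prems by (cases "i < j") (auto simp: less_Suc_eq)
qed simp

lemma grid_nonneg:
  fixes g :: "nat \<Rightarrow> real"
  assumes "0 \<le> g 0" "\<And>i. i < n \<Longrightarrow> g i < g (Suc i)" "i \<le> n"
  shows "0 \<le> g i"
  using grid_less[of n g 0 i] assms by (cases "i = 0") auto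

lemma dyadic_approx_below:
  fixes a \<delta> r d :: real
  assumes d: "0 < \<delta>" and r: "a \<le> r" "r \<le> a + \<delta>" and d0: "d > 0"
  obtains m k :: nat where "k \<le> 2 ^ m" "a + real k * \<delta> / 2 ^ m \<le> r" "r - (a + real k * \<delta> / 2 ^ m) < d"
proof -
  obtain m :: nat where m: "\<delta> / d < 2 ^ m" using real_arch_pow[of 2 "\<delta> / d"] by auto
  define q where "q = (r - a) * 2 ^ m / \<delta>"
  have q0: "0 \<le> q" using r d by (simp add: q_def)
  have q1: "q \<le> 2 ^ m" using r d by (simp add: q_def divide_le_eq mult_right_mono)
  define k where "k = nat \<lfloor>q\<rfloor>"
  have kq: "real k \<le> q" "q < real k + 1" using q0 by (simp_all add: k_def)
  have "real k \<le> 2 ^ m" using kq q1 by linarith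
  then have k: "k \<le> 2 ^ m" by (metis of_nat_le_iff of_nat_numeral of_nat_power)
  have "real k * \<delta> / 2 ^ m \<le> q * \<delta> / 2 ^ m" using kq d by (intro divide_right_mono mult_right_mono) auto
  then have le: "a + real k * \<delta> / 2 ^ m \<le> r" using d by (simp add: q_def)
  have "(q - real k) * \<delta> / 2 ^ m < 1 * \<delta> / 2 ^ m"
    using kq d by (intro divide_strict_right_mono mult_strict_right_mono) auto
  also have "\<dots> < d" using m d d0 by (simp add: field_simps)
  also have "(q - real k) * \<delta> / 2 ^ m = r - (a + real k * \<delta> / 2 ^ m)"
    using d by (simp add: q_def field_simps)
  finally show ?thesis using that k le by blast
qed

lemma grid_cell_exists:
  fixes \<delta> t :: real
  assumes "N > 0" "\<delta> > 0" "\<delta> * real N = T" "t \<in> {0..T}"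
  obtains j where "j < N" "real j * \<delta> \<le> t" "t \<le> real j * \<delta> + \<delta>"
proof (cases "t < T")
  case True
  define q where "q = t / \<delta>"
  have q0: "0 \<le> q" using assms by (simp add: q_def)
  have qN: "q < real N" using True assms by (simp add: q_def field_simps)
  have kq: "real (nat \<lfloor>q\<rfloor>) \<le> q" "q < real (nat \<lfloor>q\<rfloor>) + 1" using q0 by simp_all
  have "nat \<lfloor>q\<rfloor> < N" using kq qN by linarith
  moreover have "real (nat \<lfloor>q\<rfloor>) * \<delta> \<le> t" using kq(1) assms by (simp add: q_def field_simps)
  moreover have "t \<le> real (nat \<lfloor>q\<rfloor>) * \<delta> + \<delta>" using kq(2) assms by (simp add: q_def field_simps)
  ultimately show ?thesis by (rule that)
next
  case False
  then have t: "t = T" using assms by simp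
  have "real (N - 1) * \<delta> + \<delta> = T" using assms by (simp add: of_nat_diff algebra_simps)
  then show ?thesis using assms(1,2) t by (intro that[of "N - 1"]) auto
qed

lemma exists_fine_grid:
  fixes T \<delta>0 :: real
  assumes "T > 0" "\<delta>0 > 0"
  obtains N :: nat and \<delta> :: real where "N > 0" "\<delta> > 0" "\<delta> * real N = T" "\<delta> < \<delta>0"
proof -
  obtain N :: nat where N: "T / \<delta>0 < real N" using reals_Archimedean2 by blast
  moreover have "0 < T / \<delta>0" using assms by simp
  ultimately have "N > 0" by (metis of_nat_0_less_iff order.strict_trans)
  then show ?thesis using that[of N "T / real N"] N assms by (simp add: field_simps)
qed

lemma exp_neg_le_quadratic: fixes x :: real assumes "x \<ge> 0" shows "exp (- x) \<le> 1 - x + x\<^sup>2 / 2"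
proof -
  have "(\<lambda>y. 1 - y + y\<^sup>2 / 2 - exp (- y)) 0 \<le> (\<lambda>y. 1 - y + y\<^sup>2 / 2 - exp (- y)) x"
  proof (rule DERIV_nonneg_imp_nondecreasing[OF assms])
    fix y :: real assume y: "0 \<le> y" "y \<le> x"
    have "((\<lambda>y. 1 - y + y\<^sup>2 / 2 - exp (- y)) has_real_derivative (- 1 + y + exp (- y))) (at y)"
      by (auto intro!: derivative_eq_intros)
    moreover have "- 1 + y + exp (- y) \<ge> 0" using exp_ge_add_one_self[of "- y"] by linarith
    ultimately show "\<exists>d. ((\<lambda>y. 1 - y + y\<^sup>2 / 2 - exp (- y)) has_real_derivative d) (at y) \<and> d \<ge> 0" by blast
  qed
  then show ?thesis by simp
qed

text \<open>Riemann sums for the variance \<open>\<integral>\<^sub>0\<^sup>j\<^sup>\<delta> e\<^sup>-\<^sup>2\<^sup>\<mu>\<^sup>r dr = (1 - e\<^sup>-\<^sup>2\<^sup>\<mu>\<^sup>j\<^sup>\<delta>) / (2\<mu>)\<close>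
  of the discounted integral.\<close>

lemma grid_variance_le:
  fixes \<mu> \<delta> :: real
  assumes "\<mu> > 0" "\<delta> > 0" "\<mu> * \<delta> < 1"
  shows "(\<Sum>k<j. (exp (- \<mu> * (real k * \<delta>)))\<^sup>2 * \<delta>)
           \<le> ((1 - exp (- 2 * \<mu> * (real j * \<delta>))) / (2 * \<mu>)) / (1 - \<mu> * \<delta>)"
proof -
  define e where "e k = exp (- 2 * \<mu> * (real k * \<delta>))" for k :: nat
  have x: "2 * \<mu> * \<delta> * (1 - \<mu> * \<delta>) \<le> 1 - exp (- (2 * \<mu> * \<delta>))"
    using exp_neg_le_quadratic[of "2 * \<mu> * \<delta>"] assms by (simp add: power2_eq_square algebra_simps)
  have sq: "(exp (- \<mu> * (real k * \<delta>)))\<^sup>2 = e k" for k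
    by (simp add: e_def power2_eq_square exp_add[symmetric])
  have trm: "(2 * \<mu> * (1 - \<mu> * \<delta>)) * (e k * \<delta>) \<le> e k - e (Suc k)" for k
  proof -
    have "e (Suc k) = e k * exp (- (2 * \<mu> * \<delta>))"
      by (simp add: e_def exp_add[symmetric] algebra_simps)
    moreover have "e k * (2 * \<mu> * \<delta> * (1 - \<mu> * \<delta>)) \<le> e k * (1 - exp (- (2 * \<mu> * \<delta>)))"
      using x by (intro mult_left_mono) (auto simp: e_def)
    ultimately show ?thesis by (simp add: algebra_simps)
  qed
  have "(2 * \<mu> * (1 - \<mu> * \<delta>)) * (\<Sum>k<j. e k * \<delta>) \<le> (\<Sum>k<j. e k - e (Suc k))"
    unfolding sum_distrib_left by (rule sum_mono) (rule trm)
  also have "\<dots> = e 0 - e j" by (rule sum_lessThan_telescope')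
  also have "\<dots> = 1 - exp (- 2 * \<mu> * (real j * \<delta>))" by (simp add: e_def)
  finally have "(2 * \<mu> * (1 - \<mu> * \<delta>)) * (\<Sum>k<j. e k * \<delta>) \<le> 1 - exp (- 2 * \<mu> * (real j * \<delta>))" .
  moreover have "0 < 2 * \<mu> * (1 - \<mu> * \<delta>)" using assms by simp
  ultimately show ?thesis unfolding sq by (simp add: field_simps mult.commute)
qed

lemma grid_variance_ge:
  fixes \<mu> \<delta> :: real
  assumes "\<mu> > 0" "\<delta> > 0"
  shows "(1 - exp (- 2 * \<mu> * (real j * \<delta>))) / (2 * \<mu>) \<le> (\<Sum>k<j. (exp (- \<mu> * (real k * \<delta>)))\<^sup>2 * \<delta>)"
proof -
  define e where "e k = exp (- 2 * \<mu> * (real k * \<delta>))" for k :: nat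
  have x: "1 - exp (- (2 * \<mu> * \<delta>)) \<le> 2 * \<mu> * \<delta>"
    using exp_ge_add_one_self[of "- (2 * \<mu> * \<delta>)"] by linarith
  have sq: "(exp (- \<mu> * (real k * \<delta>)))\<^sup>2 = e k" for k
    by (simp add: e_def power2_eq_square exp_add[symmetric])
  have trm: "e k - e (Suc k) \<le> (2 * \<mu>) * (e k * \<delta>)" for k
  proof -
    have "e (Suc k) = e k * exp (- (2 * \<mu> * \<delta>))"
      by (simp add: e_def exp_add[symmetric] algebra_simps)
    moreover have "e k * (1 - exp (- (2 * \<mu> * \<delta>))) \<le> e k * (2 * \<mu> * \<delta>)"
      using x by (intro mult_left_mono) (auto simp: e_def)
    ultimately show ?thesis by (simp add: algebra_simps)
  qed
  have "1 - exp (- 2 * \<mu> * (real j * \<delta>)) = e 0 - e j" by (simp add: e_def)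
  also have "\<dots> = (\<Sum>k<j. e k - e (Suc k))" by (rule sum_lessThan_telescope'[symmetric])
  also have "\<dots> \<le> (2 * \<mu>) * (\<Sum>k<j. e k * \<delta>)"
    unfolding sum_distrib_left by (rule sum_mono) (rule trm)
  finally show ?thesis unfolding sq using assms by (simp add: field_simps mult.commute)
qed

lemma sum_square_optimal_profile:
  fixes h \<sigma> \<Delta> \<tau> :: real
  assumes "\<Delta> > 0" "\<sigma> > 0" "\<tau> = (\<Sum>k<n. (exp (- \<mu> * (real k * \<Delta>)))\<^sup>2 * \<Delta>)" "\<tau> > 0"
  shows "(\<Sum>k<n. (h * exp (- \<mu> * (real k * \<Delta>)) * \<Delta> / (\<tau> * \<sigma>))\<^sup>2 / (2 * \<Delta>)) = h\<^sup>2 / (2 * \<sigma>\<^sup>2 * \<tau>)"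
proof -
  have "(\<Sum>k<n. (h * exp (- \<mu> * (real k * \<Delta>)) * \<Delta> / (\<tau> * \<sigma>))\<^sup>2 / (2 * \<Delta>))
      = (\<Sum>k<n. (h\<^sup>2 / (2 * \<sigma>\<^sup>2 * \<tau>\<^sup>2)) * ((exp (- \<mu> * (real k * \<Delta>)))\<^sup>2 * \<Delta>))"
    using assms(1,2,4) by (intro sum.cong) (auto simp: power2_eq_square field_simps)
  also have "\<dots> = (h\<^sup>2 / (2 * \<sigma>\<^sup>2 * \<tau>\<^sup>2)) * \<tau>"
    unfolding assms(3) by (simp add: sum_distrib_left)
  also have "\<dots> = h\<^sup>2 / (2 * \<sigma>\<^sup>2 * \<tau>)" using assms(4) by (simp add: power2_eq_square)
  finally show ?thesis .
qed

lemma less_divide_swap: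
  fixes D a \<delta> \<theta> :: real
  assumes "0 < D" "0 < a" "0 < \<delta>" "\<delta> < \<theta> / (D * a)"
  shows "a < \<theta> / (D * \<delta>)"
  using assms by (simp add: field_simps)

lemma square_shrink_le:
  fixes \<eta> H \<theta> e :: real
  assumes "0 \<le> \<eta>" "\<eta> \<le> 1" "0 \<le> H" "8 * \<theta> \<le> \<eta> * H" "e \<le> \<eta> / 2"
  shows "(1 - \<eta>) * H\<^sup>2 \<le> (H - 2 * \<theta>)\<^sup>2 * (1 - e)"
proof -
  have "8 * \<theta> * H \<le> \<eta> * H * H" using mult_right_mono[OF assms(4,3)] .
  moreover have "(H - 2 * \<theta>)\<^sup>2 = H * H - 4 * \<theta> * H + 4 * \<theta>\<^sup>2" by (simp add: power2_eq_square algebra_simps)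
  moreover have "(1 - \<eta> / 2) * H\<^sup>2 = H * H - \<eta> * H * H / 2" by (simp add: power2_eq_square algebra_simps)
  moreover have "0 \<le> 4 * \<theta>\<^sup>2" by simp
  ultimately have a: "(1 - \<eta> / 2) * H\<^sup>2 \<le> (H - 2 * \<theta>)\<^sup>2" by linarith
  have "(1 - \<eta>) * H\<^sup>2 \<le> ((1 - \<eta> / 2) * H\<^sup>2) * (1 - \<eta> / 2)"
    using assms by (simp add: algebra_simps power2_eq_square)
  also have "\<dots> \<le> (H - 2 * \<theta>)\<^sup>2 * (1 - e)"
    using a assms by (intro mult_mono) auto
  finally show ?thesis .
qed

lemma square_add_min_le:
  fixes h \<tau> \<sigma> \<gamma> :: real
  assumes "h > 0" "\<tau> > 0" "\<sigma> > 0" "\<gamma> > 0"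
  defines "\<theta> \<equiv> min 1 (\<gamma> * \<sigma>\<^sup>2 * \<tau> / (2 * (2 * h + 1)))"
  shows "(h + \<theta>)\<^sup>2 / (2 * \<sigma>\<^sup>2 * \<tau>) \<le> h\<^sup>2 / (2 * \<sigma>\<^sup>2 * \<tau>) + \<gamma> / 4"
proof -
  have \<theta>: "\<theta> > 0" "\<theta> \<le> 1" using assms by (simp_all add: \<theta>_def)
  have "\<theta> * (2 * h + 1) \<le> (\<gamma> * \<sigma>\<^sup>2 * \<tau> / (2 * (2 * h + 1))) * (2 * h + 1)"
    using assms by (intro mult_right_mono) (auto simp: \<theta>_def)
  also have "\<dots> = \<gamma> * \<sigma>\<^sup>2 * \<tau> / 2" using assms by (simp add: field_simps)
  finally have a: "\<theta> * (2 * h + 1) \<le> \<gamma> * \<sigma>\<^sup>2 * \<tau> / 2" .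
  have "(h + \<theta>)\<^sup>2 = h\<^sup>2 + \<theta> * (2 * h + \<theta>)" by (simp add: power2_eq_square algebra_simps)
  also have "\<dots> \<le> h\<^sup>2 + \<theta> * (2 * h + 1)" using \<theta> by (intro add_left_mono mult_left_mono) auto
  finally have "(h + \<theta>)\<^sup>2 \<le> h\<^sup>2 + \<gamma> * \<sigma>\<^sup>2 * \<tau> / 2" using a by linarith
  then have "(h + \<theta>)\<^sup>2 / (2 * \<sigma>\<^sup>2 * \<tau>) \<le> (h\<^sup>2 + \<gamma> * \<sigma>\<^sup>2 * \<tau> / 2) / (2 * \<sigma>\<^sup>2 * \<tau>)"
    using assms by (intro divide_right_mono) auto
  also have "\<dots> = h\<^sup>2 / (2 * \<sigma>\<^sup>2 * \<tau>) + \<gamma> / 4" using assms by (simp add: add_divide_distrib)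
  finally show ?thesis .
qed

lemma exp_neg_divide_mono: "a \<le> b \<Longrightarrow> (\<epsilon>::real) > 0 \<Longrightarrow> exp (- b / \<epsilon>) \<le> exp (- a / \<epsilon>)"
  by (simp add: divide_right_mono)

lemma eventually_mult_exp_neg_divide_le_1:
  fixes C \<gamma> :: real assumes g: "\<gamma> > 0"
  shows "eventually (\<lambda>\<epsilon>. C * exp (- \<gamma> / \<epsilon>) \<le> 1) (at_right 0)"
  unfolding eventually_at_right_field
proof (intro exI[of _ "\<gamma> / (\<bar>C\<bar> + 1)"] conjI allI impI)
  show "0 < \<gamma> / (\<bar>C\<bar> + 1)" using g by simp
  fix \<epsilon> :: real assume e: "0 < \<epsilon>" "\<epsilon> < \<gamma> / (\<bar>C\<bar> + 1)"
  then have "\<bar>C\<bar> + 1 < \<gamma> / \<epsilon>" by (simp add: field_simps)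
  moreover have "1 + \<gamma> / \<epsilon> \<le> exp (\<gamma> / \<epsilon>)" by (rule exp_ge_add_one_self)
  ultimately have "C \<le> exp (\<gamma> / \<epsilon>)" by linarith
  then show "C * exp (- \<gamma> / \<epsilon>) \<le> 1" by (simp add: exp_minus field_simps)
qed

lemma tendsto_mult_ln_of_exp_bounds:
  fixes p :: "real \<Rightarrow> real"
  assumes "\<And>\<gamma>. \<gamma> > 0 \<Longrightarrow>
    eventually (\<lambda>\<epsilon>. exp (- (R + \<gamma>) / \<epsilon>) \<le> p \<epsilon> \<and> p \<epsilon> \<le> exp (- (R - \<gamma>) / \<epsilon>)) (at_right 0)"
  shows "((\<lambda>\<epsilon>. \<epsilon> * ln (p \<epsilon>)) \<longlongrightarrow> - R) (at_right 0)"
proof (rule tendstoI)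
  fix e :: real assume e: "e > 0"
  have ev: "eventually (\<lambda>\<epsilon>. exp (- (R + e/2) / \<epsilon>) \<le> p \<epsilon> \<and> p \<epsilon> \<le> exp (- (R - e/2) / \<epsilon>)) (at_right 0)"
    using assms[of "e/2"] e by simp
  have pos: "eventually (\<lambda>\<epsilon>. \<epsilon> > (0::real)) (at_right 0)" by (simp add: eventually_at_right_less)
  show "eventually (\<lambda>\<epsilon>. dist (\<epsilon> * ln (p \<epsilon>)) (- R) < e) (at_right 0)"
    using ev pos
  proof eventually_elim
    case (elim \<epsilon>)
    have pp: "p \<epsilon> > 0" using elim(1) by (meson exp_gt_zero less_le_trans)
    have "- (R + e/2) / \<epsilon> \<le> ln (p \<epsilon>)" "ln (p \<epsilon>) \<le> - (R - e/2) / \<epsilon>"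
      using elim pp by (metis exp_le_cancel_iff exp_ln)+
    then have "- (R + e/2) \<le> \<epsilon> * ln (p \<epsilon>)" "\<epsilon> * ln (p \<epsilon>) \<le> - (R - e/2)"
      using elim(2) by (simp_all add: field_simps)
    then show ?case using e by (simp add: dist_real_def abs_less_iff)
  qed
qed

lemma continuous_INF_le_0_iff:
  fixes g :: "real \<Rightarrow> real"
  assumes "continuous_on {0..T} g" "T \<ge> 0"
  shows "(INF t\<in>{0..T}. g t) \<le> 0 \<longleftrightarrow> (\<exists>t\<in>{0..T}. g t \<le> 0)"
proof -
  obtain t0 where t0: "t0 \<in> {0..T}" "\<And>y. y \<in> {0..T} \<Longrightarrow> g t0 \<le> g y"
    using continuous_attains_inf[OF compact_Icc _ assms(1)] assms(2) by auto
  have "(INF t\<in>{0..T}. g t) = g t0" by (rule cInf_eq_minimum) (use t0 in auto)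
  then show ?thesis using t0 by (metis order_trans)
qed

lemma continuous_SUP_ge_0_iff:
  fixes g :: "real \<Rightarrow> real"
  assumes "continuous_on {0..T} g" "T \<ge> 0"
  shows "(SUP t\<in>{0..T}. g t) \<ge> 0 \<longleftrightarrow> (\<exists>t\<in>{0..T}. g t \<ge> 0)"
proof -
  obtain t0 where t0: "t0 \<in> {0..T}" "\<And>y. y \<in> {0..T} \<Longrightarrow> g y \<le> g t0"
    using continuous_attains_sup[OF compact_Icc _ assms(1)] assms(2) by auto
  have "(SUP t\<in>{0..T}. g t) = g t0" by (rule cSup_eq_maximum) (use t0 in auto)
  then show ?thesis using t0 by (metis order_trans)
qed

lemma rat_near_in_interval:
  fixes t T d :: real
  assumes "t \<in> {0..T}" "T > 0" "d > 0"
  obtains q :: rat where "of_rat q \<in> {0..T}" "\<bar>of_rat q - t\<bar> < d"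
proof (cases "t < T")
  case True
  obtain q :: rat where q: "t < of_rat q" "of_rat q < min (t + d) T"
    using of_rat_dense[of t "min (t + d) T"] True assms by auto
  have "0 \<le> t" using assms by simp
  then have "(0::real) \<le> of_rat q" using q by linarith
  then show ?thesis using that[of q] q by auto
next
  case False
  obtain q :: rat where q: "max (T - d) 0 < of_rat q" "of_rat q < T"
    using of_rat_dense[of "max (T - d) 0" T] assms by auto
  have "(0::real) \<le> of_rat q" "\<bar>of_rat q - t\<bar> < d" using q assms False by auto
  then show ?thesis using that[of q] q by auto
qed

section \<open>Gaussian increments and a maximal inequality for Brownian motion\<close>

lemma normal_density_mgf:
  fixes s :: real assumes s: "s > 0"
  shows "has_bochner_integral lborel (\<lambda>x. normal_density 0 s x * exp (\<theta> * x)) (exp (\<theta>\<^sup>2 * s\<^sup>2 / 2))"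
proof -
  have shift: "normal_density 0 s x * exp (\<theta> * x) = exp (\<theta>\<^sup>2 * s\<^sup>2 / 2) * normal_density (\<theta> * s\<^sup>2) s x" for x
  proof -
    have "-(x - 0)\<^sup>2 / (2 * s\<^sup>2) + \<theta> * x = \<theta>\<^sup>2 * s\<^sup>2 / 2 + (-(x - \<theta> * s\<^sup>2)\<^sup>2 / (2 * s\<^sup>2))"
      using s by (simp add: field_simps power2_eq_square)
    then show ?thesis unfolding normal_density_def
      by (simp add: exp_add[symmetric] mult_ac)
  qed
  have "has_bochner_integral lborel (normal_density (\<theta> * s\<^sup>2) s) 1"
    using has_bochner_integral_integrable[OF integrable_normal_density, of s "\<theta> * s\<^sup>2"] s by simp
  then have "has_bochner_integral lborel (\<lambda>x. exp (\<theta>\<^sup>2 * s\<^sup>2 / 2) * normal_density (\<theta> * s\<^sup>2) s x)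
      (exp (\<theta>\<^sup>2 * s\<^sup>2 / 2) * 1)"
    by (rule has_bochner_integral_mult_right)
  then show ?thesis by (simp add: shift)
qed

lemma normal_density_antimono_abs:
  assumes "\<bar>x\<bar> \<le> m" shows "normal_density 0 s m \<le> normal_density 0 s x"
proof -
  have "x\<^sup>2 \<le> m\<^sup>2" using assms by (metis abs_le_square_iff abs_of_nonneg abs_ge_zero order_trans)
  then have "-(m - 0)\<^sup>2 / (2 * s\<^sup>2) \<le> -(x - 0)\<^sup>2 / (2 * s\<^sup>2)"
    by (simp add: divide_right_mono)
  then show ?thesis unfolding normal_density_def
    by (intro mult_left_mono) auto
qed

lemma normal_density_at_sd: "s > 0 \<Longrightarrow> s * normal_density 0 s s = std_normal_density 1"
  unfolding normal_density_def by (simp add: real_sqrt_mult power2_eq_square field_simps)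

lemma std_normal_density_1_le_1: "std_normal_density 1 \<le> (1::real)"
proof -
  have "exp (-1/2::real) \<le> 1" by simp
  moreover have s: "1 \<le> sqrt (2 * pi)" using pi_gt3 by simp
  ultimately have "exp (-1/2::real) \<le> sqrt (2 * pi)" by linarith
  then show ?thesis unfolding normal_density_def using s by (simp add: divide_le_eq_1)
qed

lemma measurable_PiM_component_any[measurable]:
  "(\<lambda>x. x i) \<in> borel_measurable (PiM I (\<lambda>_. borel :: real measure))"
proof (cases "i \<in> I")
  case True then show ?thesis by (rule measurable_component_singleton)
next
  case False
  have "(\<lambda>x. undefined) \<in> borel_measurable (PiM I (\<lambda>_. borel :: real measure))" by simp
  moreover have "x \<in> space (PiM I (\<lambda>_. borel :: real measure)) \<Longrightarrow> undefined = x i" for x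
    using False by (auto simp: space_PiM PiE_def extensional_def)
  ultimately show ?thesis by (rule measurable_cong[THEN iffD1, rotated])
qed

locale brownian_motion =
  fixes M :: "'a measure" and W :: "real \<Rightarrow> 'a \<Rightarrow> real"
  assumes std_bm: "std_brownian_motion M W"
begin

sublocale prob_space M
  using std_bm by (simp add: std_brownian_motion_def)

lemma measurable_W[measurable]: "W t \<in> borel_measurable M"
  using std_bm by (simp add: std_brownian_motion_def)

lemma W_zero: "\<omega> \<in> space M \<Longrightarrow> W 0 \<omega> = 0"
  using std_bm by (simp add: std_brownian_motion_def)

lemma continuous_on_W: "\<omega> \<in> space M \<Longrightarrow> continuous_on {0..} (\<lambda>t. W t \<omega>)"
  using std_bm by (simp add: std_brownian_motion_def)

lemma distributed_increment: "0 \<le> s \<Longrightarrow> s < t \<Longrightarrow>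
  distributed M lborel (\<lambda>\<omega>. W t \<omega> - W s \<omega>) (normal_density 0 (sqrt (t - s)))"
  using std_bm by (simp add: std_brownian_motion_def)

lemma indep_increments: "0 \<le> ts 0 \<Longrightarrow> (\<And>i. i < n \<Longrightarrow> ts i < ts (Suc i)) \<Longrightarrow>
  indep_vars (\<lambda>_. borel) (\<lambda>i \<omega>. W (ts (Suc i)) \<omega> - W (ts i) \<omega>) {..<n}"
  using std_bm unfolding std_brownian_motion_def by blast

lemma exp_increment:
  assumes "0 \<le> s" "s < t"
  shows "integrable M (\<lambda>\<omega>. exp (\<theta> * (W t \<omega> - W s \<omega>)))"
    and "expectation (\<lambda>\<omega>. exp (\<theta> * (W t \<omega> - W s \<omega>))) = exp (\<theta>\<^sup>2 * (t - s) / 2)"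
proof -
  let ?s = "sqrt (t - s)"
  have sp: "?s > 0" using assms by simp
  have D: "distributed M lborel (\<lambda>\<omega>. W t \<omega> - W s \<omega>) (normal_density 0 ?s)"
    using distributed_increment assms by blast
  have hb: "has_bochner_integral lborel (\<lambda>x. normal_density 0 ?s x * exp (\<theta> * x)) (exp (\<theta>\<^sup>2 * ?s\<^sup>2 / 2))"
    by (rule normal_density_mgf[OF sp])
  have "integrable lborel (\<lambda>x. normal_density 0 ?s x * exp (\<theta> * x))"
    using hb by (rule integrable.intros)
  then show "integrable M (\<lambda>\<omega>. exp (\<theta> * (W t \<omega> - W s \<omega>)))"
    using distributed_integrable[OF D, of "\<lambda>x. exp (\<theta> * x)"] by simp
  have "expectation (\<lambda>\<omega>. exp (\<theta> * (W t \<omega> - W s \<omega>))) = (\<integral>x. normal_density 0 ?s x * exp (\<theta> * x) \<partial>lborel)"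
    using distributed_integral[OF D, of "\<lambda>x. exp (\<theta> * x)"] by simp
  also have "\<dots> = exp (\<theta>\<^sup>2 * ?s\<^sup>2 / 2)" using hb by (simp add: has_bochner_integral_iff)
  finally show "expectation (\<lambda>\<omega>. exp (\<theta> * (W t \<omega> - W s \<omega>))) = exp (\<theta>\<^sup>2 * (t - s) / 2)"
    using assms by simp
qed

lemma prob_increment_in_interval_ge:
  assumes "0 \<le> s" "s < t" "a \<le> b" "\<And>x. a \<le> x \<Longrightarrow> x \<le> b \<Longrightarrow> \<bar>x\<bar> \<le> m"
  shows "(b - a) * normal_density 0 (sqrt (t - s)) m
           \<le> prob {\<omega> \<in> space M. a \<le> W t \<omega> - W s \<omega> \<and> W t \<omega> - W s \<omega> \<le> b}"
proof -
  let ?f = "normal_density 0 (sqrt (t - s))"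
  have D: "distributed M lborel (\<lambda>\<omega>. W t \<omega> - W s \<omega>) ?f"
    using distributed_increment assms by blast
  have "ennreal ((b - a) * ?f m) = ennreal (?f m) * emeasure lborel {a..b}"
    using assms(3) by (simp add: ennreal_mult[symmetric] mult.commute)
  also have "\<dots> = (\<integral>\<^sup>+x. ennreal (?f m) * indicator {a..b} x \<partial>lborel)"
    by (rule nn_integral_cmult_indicator[symmetric]) simp
  also have "\<dots> \<le> (\<integral>\<^sup>+x. ennreal (?f x) * indicator {a..b} x \<partial>lborel)"
  proof (rule nn_integral_mono)
    fix x show "ennreal (?f m) * indicator {a..b} x \<le> ennreal (?f x) * indicator {a..b} x"
    proof (cases "x \<in> {a..b}")
      case True
      then have "?f m \<le> ?f x" using assms(4)[of x] by (intro normal_density_antimono_abs) auto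
      then show ?thesis using True by (simp add: ennreal_leI)
    qed simp
  qed
  also have "\<dots> = emeasure M ((\<lambda>\<omega>. W t \<omega> - W s \<omega>) -` {a..b} \<inter> space M)"
    using distributed_emeasure[OF D, of "{a..b}"] by simp
  also have "(\<lambda>\<omega>. W t \<omega> - W s \<omega>) -` {a..b} \<inter> space M
      = {\<omega> \<in> space M. a \<le> W t \<omega> - W s \<omega> \<and> W t \<omega> - W s \<omega> \<le> b}"
    by auto
  finally show ?thesis by (simp add: emeasure_eq_measure)
qed

lemma prob_all_increments_le_ge:
  assumes D: "\<Delta> > 0" and n: "n > 0" and a: "\<And>k. k < n \<Longrightarrow> a k \<ge> 0"
  shows "exp (- (\<Sum>k<n. (a k + sqrt \<Delta>)\<^sup>2 / (2 * \<Delta>))) / (sqrt (2 * pi)) ^ n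
     \<le> prob {\<omega> \<in> space M. \<forall>k<n. W (real (Suc k) * \<Delta>) \<omega> - W (real k * \<Delta>) \<omega> \<le> - a k}"
proof -
  define Y where "Y k \<omega> = W (real (Suc k) * \<Delta>) \<omega> - W (real k * \<Delta>) \<omega>" for k \<omega>
  have Ym[measurable]: "Y k \<in> borel_measurable M" for k unfolding Y_def by measurable
  have ind: "indep_vars (\<lambda>_. borel) Y {..<n}"
    unfolding Y_def by (rule indep_increments[where ts="\<lambda>k. real k * \<Delta>"]) (use D in auto)
  have eqA: "{\<omega> \<in> space M. \<forall>k<n. Y k \<omega> \<le> - a k} = (\<Inter>k\<in>{..<n}. Y k -` {.. - a k} \<inter> space M)"
    using n by auto
  have P: "prob {\<omega> \<in> space M. \<forall>k<n. Y k \<omega> \<le> - a k} = (\<Prod>k<n. prob (Y k -` {.. - a k} \<inter> space M))"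
    unfolding eqA by (rule indep_varsD[OF ind]) (use n in auto)
  have single: "exp (- ((a k + sqrt \<Delta>)\<^sup>2 / (2 * \<Delta>))) / sqrt (2 * pi) \<le> prob (Y k -` {.. - a k} \<inter> space M)"
    if k: "k < n" for k
  proof -
    have "exp (- ((a k + sqrt \<Delta>)\<^sup>2 / (2 * \<Delta>))) / sqrt (2 * pi)
        = (- a k - (- a k - sqrt \<Delta>)) * normal_density 0 (sqrt (real (Suc k) * \<Delta> - real k * \<Delta>)) (a k + sqrt \<Delta>)"
    proof -
      have "real (Suc k) * \<Delta> - real k * \<Delta> = \<Delta>" by (simp add: algebra_simps)
      moreover have "sqrt (2 * pi * \<Delta>) = sqrt (2 * pi) * sqrt \<Delta>" by (simp add: real_sqrt_mult)
      ultimately show ?thesis unfolding normal_density_def using D by (simp add: field_simps)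
    qed
    also have "\<dots> \<le> prob {\<omega> \<in> space M. - a k - sqrt \<Delta> \<le> W (real (Suc k) * \<Delta>) \<omega> - W (real k * \<Delta>) \<omega>
                     \<and> W (real (Suc k) * \<Delta>) \<omega> - W (real k * \<Delta>) \<omega> \<le> - a k}"
      by (rule prob_increment_in_interval_ge) (use D a[OF k] in \<open>auto simp: algebra_simps\<close>)
    also have "\<dots> \<le> prob (Y k -` {.. - a k} \<inter> space M)"
      by (rule finite_measure_mono) (auto simp: Y_def)
    finally show ?thesis .
  qed
  have "exp (- (\<Sum>k<n. (a k + sqrt \<Delta>)\<^sup>2 / (2 * \<Delta>))) / (sqrt (2 * pi)) ^ n
      = (\<Prod>k<n. exp (- ((a k + sqrt \<Delta>)\<^sup>2 / (2 * \<Delta>))) / sqrt (2 * pi))"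
    by (simp add: exp_sum[symmetric] prod_dividef sum_negf)
  also have "\<dots> \<le> (\<Prod>k<n. prob (Y k -` {.. - a k} \<inter> space M))"
    by (rule prod_mono) (use single in auto)
  finally show ?thesis using P by (simp add: Y_def)
qed

lemma exp_weighted_increments:
  assumes "0 \<le> ts 0" "\<And>i. i < n \<Longrightarrow> ts i < ts (Suc i)"
  shows "integrable M (\<lambda>\<omega>. exp (\<Sum>i<n. c i * (W (ts (Suc i)) \<omega> - W (ts i) \<omega>)))"
    and "expectation (\<lambda>\<omega>. exp (\<Sum>i<n. c i * (W (ts (Suc i)) \<omega> - W (ts i) \<omega>)))
         = exp ((\<Sum>i<n. (c i)\<^sup>2 * (ts (Suc i) - ts i)) / 2)"
proof -
  let ?Y = "\<lambda>i \<omega>. exp (c i * (W (ts (Suc i)) \<omega> - W (ts i) \<omega>))"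
  have "indep_vars (\<lambda>_. borel) (\<lambda>i x. (\<lambda>i y. exp (c i * y)) i (W (ts (Suc i)) x - W (ts i) x)) {..<n}"
    by (rule indep_vars_compose2[OF indep_increments[OF assms]]) measurable
  then have ind: "indep_vars (\<lambda>_. borel) ?Y {..<n}" by simp
  have grid: "0 \<le> ts i" "ts i < ts (Suc i)" if "i \<in> {..<n}" for i
    using grid_nonneg[OF assms, of i] assms(2)[of i] that by auto
  have int: "integrable M (?Y i)" if "i \<in> {..<n}" for i
    using exp_increment(1) grid[OF that] by blast
  have e: "exp (\<Sum>i<n. c i * (W (ts (Suc i)) \<omega> - W (ts i) \<omega>)) = (\<Prod>i<n. ?Y i \<omega>)" for \<omega>
    by (simp add: exp_sum)
  show "integrable M (\<lambda>\<omega>. exp (\<Sum>i<n. c i * (W (ts (Suc i)) \<omega> - W (ts i) \<omega>)))"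
    unfolding e by (rule indep_vars_integrable[OF _ ind int]) auto
  have "expectation (\<lambda>\<omega>. exp (\<Sum>i<n. c i * (W (ts (Suc i)) \<omega> - W (ts i) \<omega>)))
     = (\<Prod>i<n. expectation (?Y i))"
    unfolding e by (rule indep_vars_lebesgue_integral[OF _ ind int]) auto
  also have "\<dots> = (\<Prod>i<n. exp ((c i)\<^sup>2 * (ts (Suc i) - ts i) / 2))"
    by (rule prod.cong) (auto simp: exp_increment(2) grid)
  also have "\<dots> = exp ((\<Sum>i<n. (c i)\<^sup>2 * (ts (Suc i) - ts i)) / 2)"
    by (simp add: exp_sum[symmetric] sum_divide_distrib)
  finally show "expectation (\<lambda>\<omega>. exp (\<Sum>i<n. c i * (W (ts (Suc i)) \<omega> - W (ts i) \<omega>)))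
         = exp ((\<Sum>i<n. (c i)\<^sup>2 * (ts (Suc i) - ts i)) / 2)" .
qed

text \<open>Chernoff bound at the optimal exponential parameter \<open>a / v\<close>.\<close>

lemma weighted_increments_chernoff:
  assumes "0 \<le> ts 0" "\<And>i. i < n \<Longrightarrow> ts i < ts (Suc i)"
    and v: "v = (\<Sum>i<n. (c i)\<^sup>2 * (ts (Suc i) - ts i))" "v > 0" and a: "a \<ge> 0"
  shows "prob {\<omega> \<in> space M. (\<Sum>i<n. c i * (W (ts (Suc i)) \<omega> - W (ts i) \<omega>)) \<le> - a}
           \<le> exp (- a\<^sup>2 / (2 * v))"
proof -
  let ?S = "\<lambda>\<omega>. (\<Sum>i<n. c i * (W (ts (Suc i)) \<omega> - W (ts i) \<omega>))"
  define l where "l = a / v"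
  let ?E = "\<lambda>\<omega>. exp (\<Sum>i<n. (- l * c i) * (W (ts (Suc i)) \<omega> - W (ts i) \<omega>))"
  have l: "l \<ge> 0" using a v by (simp add: l_def)
  have I: "integrable M ?E"
    by (rule exp_weighted_increments(1)[OF assms(1,2)])
  have "expectation ?E = exp ((\<Sum>i<n. (- l * c i)\<^sup>2 * (ts (Suc i) - ts i)) / 2)"
    by (rule exp_weighted_increments(2)[OF assms(1,2)])
  also have "(\<Sum>i<n. (- l * c i)\<^sup>2 * (ts (Suc i) - ts i)) = l\<^sup>2 * v"
    unfolding v(1) by (simp add: sum_distrib_left power_mult_distrib mult.assoc)
  finally have E: "expectation ?E = exp (l\<^sup>2 * v / 2)" .
  have ES: "?E \<omega> = exp (- l * ?S \<omega>)" for \<omega>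
    by (simp add: sum_distrib_left mult.assoc)
  have "prob {\<omega> \<in> space M. ?S \<omega> \<le> - a} \<le> prob {\<omega> \<in> space M. ?E \<omega> \<ge> exp (l * a)}"
  proof (rule finite_measure_mono)
    have "l * a \<le> - l * ?S \<omega>" if "?S \<omega> \<le> - a" for \<omega>
      using mult_left_mono[OF that l] by simp
    then show "{\<omega> \<in> space M. ?S \<omega> \<le> - a} \<subseteq> {\<omega> \<in> space M. ?E \<omega> \<ge> exp (l * a)}"
      unfolding ES by auto
  qed measurable
  also have "\<dots> \<le> exp (l\<^sup>2 * v / 2) / exp (l * a)"
    using integral_Markov_inequality_measure[OF I, of "space M" "exp (l * a)"] E by simp
  also have "\<dots> = exp (- a\<^sup>2 / (2 * v))"
    using v(2) by (simp add: l_def exp_diff[symmetric] power2_eq_square field_simps)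
  finally show ?thesis .
qed

lemma first_exceedance_indep_increment:
  fixes g :: "nat \<Rightarrow> real" and \<zeta> \<xi> :: real
  assumes g0: "0 \<le> g 0" and gi: "\<And>i. i < n \<Longrightarrow> g i < g (Suc i)" and kn: "k < n"
  defines "A \<equiv> {\<omega> \<in> space M. \<zeta> * (W (g k) \<omega> - W (g 0) \<omega>) > \<xi>
                  \<and> (\<forall>j<k. \<zeta> * (W (g j) \<omega> - W (g 0) \<omega>) \<le> \<xi>)}"
    and "B \<equiv> {\<omega> \<in> space M. \<zeta> * (W (g n) \<omega> - W (g k) \<omega>) \<ge> 0}"
  shows "prob (A \<inter> B) = prob A * prob B"
proof -
  define ts where "ts i = (if i \<le> k then g i else if i = Suc k then g n else g n + real i)" for i
  have ts0: "0 \<le> ts 0" using g0 by (simp add: ts_def)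
  have tsi: "ts i < ts (Suc i)" if "i < Suc k" for i
  proof (cases "i < k")
    case True then show ?thesis using gi[of i] kn by (simp add: ts_def)
  next
    case False then have "i = k" using that by simp
    then show ?thesis using grid_less[of n g k n, OF gi] kn by (simp add: ts_def)
  qed
  define Y where "Y i \<omega> = W (ts (Suc i)) \<omega> - W (ts i) \<omega>" for i \<omega>
  have ind: "indep_vars (\<lambda>_. borel) Y {..<Suc k}"
    unfolding Y_def by (rule indep_increments[OF ts0 tsi])
  have iv: "indep_var (PiM {..<k} (\<lambda>_. borel)) (\<lambda>\<omega>. restrict (\<lambda>i. Y i \<omega>) {..<k})
                       (PiM {k} (\<lambda>_. borel)) (\<lambda>\<omega>. restrict (\<lambda>i. Y i \<omega>) {k})"
    by (rule indep_var_restrict[OF ind]) auto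
  define Sa where "Sa = {y \<in> space (PiM {..<k} (\<lambda>_. borel :: real measure)).
      \<zeta> * (\<Sum>i<k. y i) > \<xi> \<and> (\<forall>j<k. \<zeta> * (\<Sum>i<j. y i) \<le> \<xi>)}"
  define Sb where "Sb = {y \<in> space (PiM {k} (\<lambda>_. borel :: real measure)). \<zeta> * y k \<ge> 0}"
  have Sa_m: "Sa \<in> sets (PiM {..<k} (\<lambda>_. borel))" unfolding Sa_def by measurable
  have Sb_m: "Sb \<in> sets (PiM {k} (\<lambda>_. borel))" unfolding Sb_def by measurable
  have tele: "(\<Sum>i<j. Y i \<omega>) = W (g j) \<omega> - W (g 0) \<omega>" if "j \<le> k" for j \<omega>
  proof -
    have "(\<Sum>i<j. Y i \<omega>) = (\<Sum>i<j. W (g (Suc i)) \<omega> - W (g i) \<omega>)"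
      using that by (intro sum.cong) (auto simp: Y_def ts_def)
    also have "\<dots> = W (g j) \<omega> - W (g 0) \<omega>" by (rule sum_lessThan_telescope)
    finally show ?thesis .
  qed
  have sumr: "(\<Sum>i<j. restrict (\<lambda>i. Y i \<omega>) {..<k} i) = (\<Sum>i<j. Y i \<omega>)" if "j \<le> k" for j \<omega>
    using that by (intro sum.cong) auto
  have spa: "restrict (\<lambda>i. Y i \<omega>) I \<in> space (PiM I (\<lambda>_. borel :: real measure))" for I \<omega>
    by (simp add: space_PiM)
  have eqA: "(\<lambda>\<omega>. restrict (\<lambda>i. Y i \<omega>) {..<k}) -` Sa \<inter> space M = A"
    unfolding Sa_def A_def using spa by (auto simp: sumr tele less_imp_le)
  have eqB: "(\<lambda>\<omega>. restrict (\<lambda>i. Y i \<omega>) {k}) -` Sb \<inter> space M = B"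
    unfolding Sb_def B_def using spa by (auto simp: Y_def ts_def)
  have eqAB: "(\<lambda>\<omega>. (restrict (\<lambda>i. Y i \<omega>) {..<k}, restrict (\<lambda>i. Y i \<omega>) {k})) -` (Sa \<times> Sb) \<inter> space M
      = A \<inter> B"
    using eqA eqB by auto
  show ?thesis
    using indep_varD[OF iv Sa_m Sb_m] unfolding eqAB eqA eqB .
qed

text \<open>A maximal inequality of Levy-Ottaviani type: split according to the first index at which
  the walk exceeds \<open>\<xi>\<close>; from there the remaining increment is independent and has the right
  sign with probability at least \<open>p\<close>.\<close>

lemma discrete_maximal_inequality:
  fixes g :: "nat \<Rightarrow> real"
  assumes g0: "0 \<le> g 0" and gi: "\<And>i. i < n \<Longrightarrow> g i < g (Suc i)"
    and p: "p \<le> 1" "\<And>k. k < n \<Longrightarrow> p \<le> prob {\<omega> \<in> space M. \<zeta> * (W (g n) \<omega> - W (g k) \<omega>) \<ge> 0}"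
  shows "p * prob {\<omega> \<in> space M. \<exists>k\<le>n. \<zeta> * (W (g k) \<omega> - W (g 0) \<omega>) > \<xi>}
         \<le> prob {\<omega> \<in> space M. \<zeta> * (W (g n) \<omega> - W (g 0) \<omega>) > \<xi>}"
proof -
  define S where "S k \<omega> = \<zeta> * (W (g k) \<omega> - W (g 0) \<omega>)" for k \<omega>
  define A where "A k = {\<omega> \<in> space M. S k \<omega> > \<xi> \<and> (\<forall>j<k. S j \<omega> \<le> \<xi>)}" for k
  define B where "B k = {\<omega> \<in> space M. \<zeta> * (W (g n) \<omega> - W (g k) \<omega>) \<ge> 0}" for k
  have [measurable]: "S k \<in> borel_measurable M" "A k \<in> sets M" "B k \<in> sets M" for k
    unfolding S_def A_def B_def by measurable
  have first: "{\<omega> \<in> space M. \<exists>k\<le>n. S k \<omega> > \<xi>} = (\<Union>k\<in>{..n}. A k)"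
  proof safe
    fix \<omega> k assume "\<omega> \<in> space M" "k \<le> n" "S k \<omega> > \<xi>"
    then obtain k' where "k' \<le> k" "\<forall>i<k'. \<not> S i \<omega> > \<xi>" "S k' \<omega> > \<xi>"
      using ex_least_nat_le[of "\<lambda>k. S k \<omega> > \<xi>" k] by blast
    then show "\<omega> \<in> (\<Union>k\<in>{..n}. A k)" using \<open>k \<le> n\<close> \<open>\<omega> \<in> space M\<close>
      by (auto simp: A_def not_less intro!: bexI[of _ k'])
  qed (auto simp: A_def)
  have disj: "disjoint_family_on A {..n}"
    unfolding disjoint_family_on_def A_def by (auto, metis linorder_neqE_nat not_le)
  then have disj2: "disjoint_family_on (\<lambda>k. A k \<inter> B k) {..n}"
    unfolding disjoint_family_on_def by auto
  have key: "p * prob (A k) \<le> prob (A k \<inter> B k)" if k: "k \<le> n" for k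
  proof (cases "k = n")
    case True
    then have "A k \<inter> B k = A k" by (auto simp: B_def A_def)
    then show ?thesis using mult_right_mono[OF p(1), of "prob (A k)"] by simp
  next
    case False
    then have "prob (A k \<inter> B k) = prob (A k) * prob (B k)"
      unfolding A_def B_def S_def using k by (intro first_exceedance_indep_increment[OF g0 gi]) auto
    moreover have "p \<le> prob (B k)" using p(2) False k by (simp add: B_def)
    ultimately show ?thesis using mult_right_mono[of p "prob (B k)" "prob (A k)"] by (simp add: mult.commute)
  qed
  have "p * prob {\<omega> \<in> space M. \<exists>k\<le>n. S k \<omega> > \<xi>} = (\<Sum>k\<in>{..n}. p * prob (A k))"
    unfolding first by (subst finite_measure_finite_Union) (auto intro: disj simp: sum_distrib_left)
  also have "\<dots> \<le> (\<Sum>k\<in>{..n}. prob (A k \<inter> B k))" by (rule sum_mono) (simp add: key)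
  also have "\<dots> = prob (\<Union>k\<in>{..n}. A k \<inter> B k)"
    by (subst finite_measure_finite_Union) (auto intro: disj2)
  also have "\<dots> \<le> prob {\<omega> \<in> space M. S n \<omega> > \<xi>}"
  proof (rule finite_measure_mono)
    show "(\<Union>k\<in>{..n}. A k \<inter> B k) \<subseteq> {\<omega> \<in> space M. S n \<omega> > \<xi>}"
      by (auto simp: A_def B_def S_def algebra_simps)
  qed measurable
  finally show ?thesis by (simp add: S_def)
qed

lemma prob_signed_increment_nonneg_ge:
  assumes "0 \<le> u" "u < v" "\<zeta> = 1 \<or> \<zeta> = -1"
  shows "std_normal_density 1 \<le> prob {\<omega> \<in> space M. \<zeta> * (W v \<omega> - W u \<omega>) \<ge> 0}"
proof -
  let ?s = "sqrt (v - u)"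
  have s: "?s > 0" using assms by simp
  show ?thesis
  proof (cases "\<zeta> = 1")
    case True
    have "std_normal_density 1 = (?s - 0) * normal_density 0 ?s ?s" using normal_density_at_sd[OF s] by simp
    also have "\<dots> \<le> prob {\<omega> \<in> space M. 0 \<le> W v \<omega> - W u \<omega> \<and> W v \<omega> - W u \<omega> \<le> ?s}"
      by (rule prob_increment_in_interval_ge) (use assms s in auto)
    also have "\<dots> \<le> prob {\<omega> \<in> space M. \<zeta> * (W v \<omega> - W u \<omega>) \<ge> 0}"
      by (rule finite_measure_mono) (auto simp: True)
    finally show ?thesis .
  next
    case False
    then have z: "\<zeta> = -1" using assms by simp
    have "std_normal_density 1 = (0 - (- ?s)) * normal_density 0 ?s ?s" using normal_density_at_sd[OF s] by simp
    also have "\<dots> \<le> prob {\<omega> \<in> space M. - ?s \<le> W v \<omega> - W u \<omega> \<and> W v \<omega> - W u \<omega> \<le> 0}"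
      by (rule prob_increment_in_interval_ge) (use assms s in auto)
    also have "\<dots> \<le> prob {\<omega> \<in> space M. \<zeta> * (W v \<omega> - W u \<omega>) \<ge> 0}"
      by (rule finite_measure_mono) (auto simp: z)
    finally show ?thesis .
  qed
qed

lemma signed_increment_tail:
  assumes "0 \<le> a" "0 < \<delta>" "\<xi> \<ge> 0" "\<zeta> = 1 \<or> \<zeta> = -1"
  shows "prob {\<omega> \<in> space M. \<zeta> * (W (a + \<delta>) \<omega> - W a \<omega>) > \<xi>} \<le> exp (- \<xi>\<^sup>2 / (2 * \<delta>))"
proof -
  define ts where "ts i = a + real i * \<delta>" for i :: nat
  have c: "(\<Sum>i<1. (- \<zeta>)\<^sup>2 * (ts (Suc i) - ts i)) = \<delta>" using assms by (auto simp: ts_def)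
  have "prob {\<omega> \<in> space M. \<zeta> * (W (a + \<delta>) \<omega> - W a \<omega>) > \<xi>}
      \<le> prob {\<omega> \<in> space M. (\<Sum>i<1. (- \<zeta>) * (W (ts (Suc i)) \<omega> - W (ts i) \<omega>)) \<le> - \<xi>}"
    by (rule finite_measure_mono) (auto simp: ts_def)
  also have "\<dots> \<le> exp (- \<xi>\<^sup>2 / (2 * \<delta>))"
    by (rule weighted_increments_chernoff[where v=\<delta>]) (use assms c in \<open>auto simp: ts_def\<close>)
  finally show ?thesis .
qed

lemma prob_dyadic_exceedance_le:
  assumes "0 \<le> a" "0 < \<delta>" "\<xi> \<ge> 0" "\<zeta> = 1 \<or> \<zeta> = -1"
  shows "prob {\<omega> \<in> space M. \<exists>k\<le>(2::nat)^m. \<zeta> * (W (a + real k * \<delta> / 2^m) \<omega> - W a \<omega>) > \<xi>}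
    \<le> exp (- \<xi>\<^sup>2 / (2 * \<delta>)) / std_normal_density 1"
proof -
  define g where "g k = a + real k * \<delta> / 2^m" for k :: nat
  have g0: "0 \<le> g 0" "g 0 = a" using assms by (auto simp: g_def)
  have gn: "g (2^m) = a + \<delta>" by (simp add: g_def)
  have gi: "g i < g (Suc i)" for i using assms by (simp add: g_def field_simps)
  have "std_normal_density 1 * prob {\<omega> \<in> space M. \<exists>k\<le>2^m. \<zeta> * (W (g k) \<omega> - W (g 0) \<omega>) > \<xi>}
      \<le> prob {\<omega> \<in> space M. \<zeta> * (W (g (2^m)) \<omega> - W (g 0) \<omega>) > \<xi>}"
  proof (rule discrete_maximal_inequality[OF g0(1) gi std_normal_density_1_le_1])
    fix k :: nat assume "k < 2^m"
    then have "g k < g (2^m)" using grid_less[of "2^m" g k "2^m", OF gi] by simp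
    moreover have "0 \<le> g k" using assms by (simp add: g_def)
    ultimately show "std_normal_density 1 \<le> prob {\<omega> \<in> space M. 0 \<le> \<zeta> * (W (g (2 ^ m)) \<omega> - W (g k) \<omega>)}"
      using prob_signed_increment_nonneg_ge assms(4) by blast
  qed
  also have "\<dots> \<le> exp (- \<xi>\<^sup>2 / (2 * \<delta>))" unfolding gn g0(2) by (rule signed_increment_tail[OF assms])
  finally show ?thesis using normal_density_pos[of 1 0 1] by (simp add: g_def g0 field_simps)
qed

definition osc_event :: "real \<Rightarrow> real \<Rightarrow> real \<Rightarrow> 'a set" where
  "osc_event a \<delta> \<xi> =
     {\<omega> \<in> space M. \<exists>m::nat. \<exists>k\<le>(2::nat)^m. \<bar>W (a + real k * \<delta> / 2^m) \<omega> - W a \<omega>\<bar> > \<xi>}"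

lemma sets_osc_event[measurable]: "osc_event a \<delta> \<xi> \<in> sets M"
  unfolding osc_event_def by measurable

lemma prob_osc_event_le:
  assumes "0 \<le> a" "0 < \<delta>" "\<xi> \<ge> 0"
  shows "prob (osc_event a \<delta> \<xi>) \<le> 2 * exp (- \<xi>\<^sup>2 / (2 * \<delta>)) / std_normal_density 1"
proof -
  define D where "D m = {\<omega> \<in> space M. \<exists>k\<le>(2::nat)^m. \<bar>W (a + real k * \<delta> / 2^m) \<omega> - W a \<omega>\<bar> > \<xi>}"
    for m :: nat
  define D' where "D' \<zeta> m = {\<omega> \<in> space M. \<exists>k\<le>(2::nat)^m. \<zeta> * (W (a + real k * \<delta> / 2^m) \<omega> - W a \<omega>) > \<xi>}"
    for \<zeta> :: real and m :: nat
  have [measurable]: "D m \<in> sets M" "D' \<zeta> m \<in> sets M" for m \<zeta> unfolding D_def D'_def by measurable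
  have inc: "incseq D"
  proof (rule incseq_SucI, safe)
    fix m \<omega> assume "\<omega> \<in> D m"
    then obtain k where k: "k \<le> 2^m" "\<bar>W (a + real k * \<delta> / 2^m) \<omega> - W a \<omega>\<bar> > \<xi>" "\<omega> \<in> space M"
      by (auto simp: D_def)
    have "a + real (2 * k) * \<delta> / 2^Suc m = a + real k * \<delta> / 2^m" by simp
    then show "\<omega> \<in> D (Suc m)" using k unfolding D_def
      by (intro CollectI conjI exI[of _ "2 * k"]) auto
  qed
  have bound: "prob (D m) \<le> 2 * exp (- \<xi>\<^sup>2 / (2 * \<delta>)) / std_normal_density 1" for m
  proof -
    have "prob (D m) \<le> prob (D' 1 m \<union> D' (-1) m)"
      by (rule finite_measure_mono) (auto simp: D_def D'_def abs_real_def split: if_splits)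
    also have "\<dots> \<le> prob (D' 1 m) + prob (D' (-1) m)"
      by (rule measure_Un_le) measurable
    also have "\<dots> \<le> exp (- \<xi>\<^sup>2 / (2 * \<delta>)) / std_normal_density 1 + exp (- \<xi>\<^sup>2 / (2 * \<delta>)) / std_normal_density 1"
      unfolding D'_def by (intro add_mono prob_dyadic_exceedance_le) (use assms in auto)
    finally show ?thesis by simp
  qed
  have "(\<lambda>m. prob (D m)) \<longlonglongrightarrow> prob (\<Union>m. D m)"
    by (rule finite_Lim_measure_incseq) (use inc in auto)
  then have "prob (\<Union>m. D m) \<le> 2 * exp (- \<xi>\<^sup>2 / (2 * \<delta>)) / std_normal_density 1"
    by (rule LIMSEQ_le_const2) (use bound in auto)
  moreover have "osc_event a \<delta> \<xi> = (\<Union>m. D m)" unfolding osc_event_def D_def by auto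
  ultimately show ?thesis by simp
qed

lemma prob_osc_event_scaled_le:
  assumes "0 \<le> a" "0 < \<delta>" "0 \<le> \<theta>" "c > 0" "\<epsilon> > 0" "\<sigma> > 0"
  shows "prob (osc_event a \<delta> (\<theta> / (c * (sqrt \<epsilon> * \<sigma>))))
           \<le> 2 / std_normal_density 1 * exp (- (\<theta>\<^sup>2 / (2 * c\<^sup>2 * \<sigma>\<^sup>2 * \<delta>)) / \<epsilon>)"
proof -
  have "(\<theta> / (c * (sqrt \<epsilon> * \<sigma>)))\<^sup>2 / (2 * \<delta>) = (\<theta>\<^sup>2 / (2 * c\<^sup>2 * \<sigma>\<^sup>2 * \<delta>)) / \<epsilon>"
    using assms by (simp add: power_divide power_mult_distrib field_simps)
  then show ?thesis
    using prob_osc_event_le[of a \<delta> "\<theta> / (c * (sqrt \<epsilon> * \<sigma>))"] assms by simp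
qed

lemma increment_le_outside_osc_event:
  assumes \<omega>: "\<omega> \<in> space M" and a: "0 \<le> a" and d: "0 < \<delta>" and no: "\<omega> \<notin> osc_event a \<delta> \<xi>"
    and r: "a \<le> r" "r \<le> a + \<delta>"
  shows "\<bar>W r \<omega> - W a \<omega>\<bar> \<le> \<xi>"
proof (rule ccontr)
  assume "\<not> \<bar>W r \<omega> - W a \<omega>\<bar> \<le> \<xi>"
  define e where "e = \<bar>W r \<omega> - W a \<omega>\<bar> - \<xi>"
  have e: "e > 0" using \<open>\<not> \<bar>W r \<omega> - W a \<omega>\<bar> \<le> \<xi>\<close> by (simp add: e_def)
  have "continuous_on {a..a+\<delta>} (\<lambda>t. W t \<omega>)"
    using continuous_on_W[OF \<omega>] by (rule continuous_on_subset) (use a in auto)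
  then obtain d where d0: "d > 0"
    and dd: "\<And>t. t \<in> {a..a+\<delta>} \<Longrightarrow> dist t r < d \<Longrightarrow> dist (W t \<omega>) (W r \<omega>) < e"
    using r e unfolding continuous_on_iff by (metis atLeastAtMost_iff)
  obtain m k :: nat where k: "k \<le> 2 ^ m" "a + real k * \<delta> / 2 ^ m \<le> r"
    "r - (a + real k * \<delta> / 2 ^ m) < d"
    using dyadic_approx_below[OF d r d0] by blast
  then have "dist (W (a + real k * \<delta> / 2 ^ m) \<omega>) (W r \<omega>) < e"
    using d r by (intro dd) (auto simp: dist_real_def)
  then have "\<bar>W (a + real k * \<delta> / 2 ^ m) \<omega> - W a \<omega>\<bar> > \<xi>"
    unfolding e_def dist_real_def by linarith
  then show False using no \<omega> k(1) unfolding osc_event_def by blast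
qed

end

section \<open>The pathwise discounted integral\<close>

lemma integral_exp_neg_mult:
  fixes \<mu> a t :: real
  assumes "\<mu> \<noteq> 0" "a \<le> t"
  shows "integral {a..t} (\<lambda>r. exp (- \<mu> * r)) = (exp (- \<mu> * a) - exp (- \<mu> * t)) / \<mu>"
proof -
  have "((\<lambda>r. exp (- \<mu> * r)) has_integral ((\<lambda>r. - exp (- \<mu> * r) / \<mu>) t - (\<lambda>r. - exp (- \<mu> * r) / \<mu>) a)) {a..t}"
  proof (rule fundamental_theorem_of_calculus[OF assms(2)])
    fix x assume "x \<in> {a..t}"
    have "((\<lambda>r. - exp (- \<mu> * r) / \<mu>) has_real_derivative exp (- \<mu> * x)) (at x within {a..t})"
      using assms(1) by (auto intro!: derivative_eq_intros simp: field_simps)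
    then show "((\<lambda>r. - exp (- \<mu> * r) / \<mu>) has_vector_derivative exp (- \<mu> * x)) (at x within {a..t})"
      by (simp add: has_real_derivative_iff_has_vector_derivative)
  qed
  then show ?thesis by (simp add: integral_unique diff_divide_distrib)
qed

text \<open>The pathwise Wiener integral \<open>\<integral>\<^sub>0\<^sup>t e\<^sup>-\<^sup>\<mu>\<^sup>r dw(r)\<close>, defined through integration by parts.\<close>

definition discounted_integral :: "real \<Rightarrow> (real \<Rightarrow> real) \<Rightarrow> real \<Rightarrow> real" where
  "discounted_integral \<mu> w t = exp (- \<mu> * t) * w t + \<mu> * integral {0..t} (\<lambda>r. exp (- \<mu> * r) * w r)"

lemma discounted_integral_increment:
  assumes \<mu>: "\<mu> \<noteq> 0" and w: "continuous_on {0..} w" and a: "0 \<le> a" "a \<le> t"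
  shows "discounted_integral \<mu> w t - discounted_integral \<mu> w a
           = exp (- \<mu> * a) * (w t - w a) + \<mu> * integral {a..t} (\<lambda>r. exp (- \<mu> * r) * (w r - w t))"
proof -
  let ?f = "\<lambda>r. exp (- \<mu> * r) * w r"
  have cf: "continuous_on {0..t} ?f"
    by (intro continuous_intros continuous_on_subset[OF w]) auto
  have split: "integral {0..a} ?f + integral {a..t} ?f = integral {0..t} ?f"
    using Henstock_Kurzweil_Integration.integral_combine[where a=0 and c=a and b=t and f="?f"] a
      integrable_continuous_real[OF cf] by auto
  have int1: "?f integrable_on {a..t}"
    by (rule integrable_continuous_real, rule continuous_on_subset[OF cf]) (use a in auto)
  have int2: "(\<lambda>r. exp (- \<mu> * r) * w t) integrable_on {a..t}"
    by (intro integrable_continuous_real continuous_intros)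
  have "integral {a..t} (\<lambda>r. exp (- \<mu> * r) * (w r - w t))
      = integral {a..t} ?f - integral {a..t} (\<lambda>r. exp (- \<mu> * r) * w t)"
    using integral_diff[OF int1 int2] by (simp add: algebra_simps)
  also have "integral {a..t} (\<lambda>r. exp (- \<mu> * r) * w t) = w t * ((exp (- \<mu> * a) - exp (- \<mu> * t)) / \<mu>)"
    using integral_exp_neg_mult[OF \<mu> a(2)]
      Henstock_Kurzweil_Integration.integral_mult_right[where c="w t" and S="{a..t}" and f="\<lambda>r. exp (- \<mu> * r)"]
    by (simp add: mult.commute)
  finally have "\<mu> * integral {a..t} (\<lambda>r. exp (- \<mu> * r) * (w r - w t))
      = \<mu> * integral {a..t} ?f - w t * (exp (- \<mu> * a) - exp (- \<mu> * t))"
    using \<mu> by (simp add: right_diff_distrib field_simps)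
  moreover have "discounted_integral \<mu> w t - discounted_integral \<mu> w a
      = exp (- \<mu> * t) * w t - exp (- \<mu> * a) * w a + \<mu> * integral {a..t} ?f"
    unfolding discounted_integral_def split[symmetric] by (simp add: algebra_simps)
  ultimately show ?thesis by (simp add: algebra_simps)
qed

lemma discounted_integral_increment_approx:
  assumes \<mu>: "\<mu> > 0" and w: "continuous_on {0..} w" and a: "0 \<le> a" "a \<le> t"
    and osc: "\<And>r. a \<le> r \<Longrightarrow> r \<le> t \<Longrightarrow> \<bar>w r - w a\<bar> \<le> \<xi>"
  shows "\<bar>discounted_integral \<mu> w t - discounted_integral \<mu> w a - exp (- \<mu> * a) * (w t - w a)\<bar>
           \<le> 2 * \<mu> * (t - a) * \<xi>"
proof -
  have "norm (integral {a..t} (\<lambda>r. exp (- \<mu> * r) * (w r - w t))) \<le> (2 * \<xi>) * (t - a)"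
  proof (rule integral_bound[OF a(2)])
    show "continuous_on {a..t} (\<lambda>r. exp (- \<mu> * r) * (w r - w t))"
      by (intro continuous_intros continuous_on_subset[OF w]) (use a in auto)
    fix r assume r: "r \<in> {a..t}"
    have "\<bar>exp (- \<mu> * r) * (w r - w t)\<bar> \<le> 1 * \<bar>w r - w t\<bar>"
      unfolding abs_mult using \<mu> r a by (intro mult_right_mono) auto
    moreover have "\<bar>w r - w t\<bar> \<le> 2 * \<xi>" using osc[of r] osc[of t] r a by auto
    ultimately show "norm (exp (- \<mu> * r) * (w r - w t)) \<le> 2 * \<xi>" by simp
  qed
  then have "\<mu> * \<bar>integral {a..t} (\<lambda>r. exp (- \<mu> * r) * (w r - w t))\<bar> \<le> \<mu> * (2 * \<xi> * (t - a))"
    using \<mu> by (intro mult_left_mono) auto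
  moreover have "discounted_integral \<mu> w t - discounted_integral \<mu> w a - exp (- \<mu> * a) * (w t - w a)
      = \<mu> * integral {a..t} (\<lambda>r. exp (- \<mu> * r) * (w r - w t))"
    using discounted_integral_increment[OF _ w a] \<mu> by simp
  ultimately show ?thesis using \<mu> by (simp add: abs_mult algebra_simps)
qed

text \<open>Variation of constants: \<open>x t = x\<^sub>0 + \<integral>\<^sub>0\<^sup>t \<mu> x + c w t\<close> forces
  \<open>e\<^sup>-\<^sup>\<mu>\<^sup>t x t - x\<^sub>0 = c \<integral>\<^sub>0\<^sup>t e\<^sup>-\<^sup>\<mu>\<^sup>r dw(r)\<close>, since the difference of the two sides has derivative zero.\<close>

lemma linear_integral_equation_solution:
  fixes x w :: "real \<Rightarrow> real"
  assumes \<mu>: "\<mu> > 0" and w: "continuous_on {0..} w" and xc: "continuous_on {0..} x"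
    and eq: "\<And>t. t \<ge> 0 \<Longrightarrow> x t = x0 + integral {0..t} (\<lambda>s. \<mu> * x s) + c * w t"
    and t: "t \<ge> 0"
  shows "exp (- \<mu> * t) * x t - x0 = c * discounted_integral \<mu> w t"
proof -
  define y where "y t = x0 + integral {0..t} (\<lambda>s. \<mu> * x s)" for t
  define \<phi> where "\<phi> t = exp (- \<mu> * t) * y t - x0 - c * \<mu> * integral {0..t} (\<lambda>r. exp (- \<mu> * r) * w r)" for t
  have "\<exists>k. \<forall>s\<in>{0..t}. \<phi> s = k"
  proof (rule has_field_derivative_zero_constant)
    fix s assume s: "s \<in> {0..t}"
    have c1: "continuous_on {0..t} (\<lambda>s. \<mu> * x s)" by (intro continuous_intros continuous_on_subset[OF xc]) auto
    have c2: "continuous_on {0..t} (\<lambda>r. exp (- \<mu> * r) * w r)" by (intro continuous_intros continuous_on_subset[OF w]) auto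
    have dy: "(y has_real_derivative (0 + \<mu> * x s)) (at s within {0..t})"
      unfolding y_def[abs_def] by (rule DERIV_add[OF DERIV_const integral_has_real_derivative[OF c1 s]])
    have dexp: "((\<lambda>u. exp (- \<mu> * u)) has_real_derivative (- \<mu> * exp (- \<mu> * s))) (at s within {0..t})"
      by (auto intro!: derivative_eq_intros)
    have "(\<phi> has_real_derivative
        ((- \<mu> * exp (- \<mu> * s)) * y s + (0 + \<mu> * x s) * exp (- \<mu> * s) - 0 - c * \<mu> * (exp (- \<mu> * s) * w s)))
        (at s within {0..t})"
      unfolding \<phi>_def[abs_def]
      by (intro DERIV_diff DERIV_mult[OF dexp dy] DERIV_cmult integral_has_real_derivative[OF c2 s] DERIV_const)
    moreover have "x s = y s + c * w s" using eq[of s] s by (simp add: y_def)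
    ultimately show "(\<phi> has_real_derivative 0) (at s within {0..t})" by (simp add: algebra_simps)
  qed simp
  then obtain k where k: "\<And>s. s \<in> {0..t} \<Longrightarrow> \<phi> s = k" by blast
  have "\<phi> 0 = 0" by (simp add: \<phi>_def y_def)
  then have "\<phi> t = 0" using k[of 0] k[of t] t by simp
  moreover have "x t = y t + c * w t" using eq[OF t] by (simp add: y_def)
  ultimately show ?thesis unfolding \<phi>_def discounted_integral_def by (simp add: algebra_simps)
qed

lemma discounted_integral_grid_approx:
  assumes \<mu>: "\<mu> > 0" and w: "continuous_on {0..} w" and w0: "w 0 = 0" and \<Delta>: "\<Delta> > 0"
    and osc: "\<And>k r. k < j \<Longrightarrow> real k * \<Delta> \<le> r \<Longrightarrow> r \<le> real k * \<Delta> + \<Delta> \<Longrightarrow> \<bar>w r - w (real k * \<Delta>)\<bar> \<le> \<xi>"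
  shows "\<bar>discounted_integral \<mu> w (real j * \<Delta>)
            - (\<Sum>k<j. exp (- \<mu> * (real k * \<Delta>)) * (w (real (Suc k) * \<Delta>) - w (real k * \<Delta>)))\<bar>
          \<le> 2 * \<mu> * (real j * \<Delta>) * \<xi>"
  using osc
proof (induction j)
  case 0 then show ?case by (simp add: discounted_integral_def w0)
next
  case (Suc j)
  have IH: "\<bar>discounted_integral \<mu> w (real j * \<Delta>)
      - (\<Sum>k<j. exp (- \<mu> * (real k * \<Delta>)) * (w (real (Suc k) * \<Delta>) - w (real k * \<Delta>)))\<bar>
      \<le> 2 * \<mu> * (real j * \<Delta>) * \<xi>"
    using Suc by simp
  have step: "real (Suc j) * \<Delta> = real j * \<Delta> + \<Delta>" by (simp add: distrib_right)
  have "\<bar>discounted_integral \<mu> w (real (Suc j) * \<Delta>) - discounted_integral \<mu> w (real j * \<Delta>)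
          - exp (- \<mu> * (real j * \<Delta>)) * (w (real (Suc j) * \<Delta>) - w (real j * \<Delta>))\<bar>
      \<le> 2 * \<mu> * (real (Suc j) * \<Delta> - real j * \<Delta>) * \<xi>"
  proof (rule discounted_integral_increment_approx[OF \<mu> w])
    show "0 \<le> real j * \<Delta>" "real j * \<Delta> \<le> real (Suc j) * \<Delta>" using \<Delta> by (simp_all add: step)
    fix r assume r: "real j * \<Delta> \<le> r" "r \<le> real (Suc j) * \<Delta>"
    show "\<bar>w r - w (real j * \<Delta>)\<bar> \<le> \<xi>" using r Suc.prems[of j r] unfolding step by simp
  qed
  moreover have "real (Suc j) * \<Delta> - real j * \<Delta> = \<Delta>" by (simp add: distrib_right)
  ultimately show ?case using IH by (simp add: distrib_right distrib_left abs_le_iff)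
qed

lemma grid_sum_le_discounted_integral:
  assumes \<mu>: "\<mu> > 0" and w: "continuous_on {0..} w" and w0: "w 0 = 0" and \<Delta>: "\<Delta> > 0"
    and osc: "\<And>k r. k \<le> j \<Longrightarrow> real k * \<Delta> \<le> r \<Longrightarrow> r \<le> real k * \<Delta> + \<Delta> \<Longrightarrow> \<bar>w r - w (real k * \<Delta>)\<bar> \<le> \<xi>"
    and t: "real j * \<Delta> \<le> t" "t \<le> real j * \<Delta> + \<Delta>"
  shows "(\<Sum>k<j. exp (- \<mu> * (real k * \<Delta>)) * (w (real (Suc k) * \<Delta>) - w (real k * \<Delta>)))
           \<le> discounted_integral \<mu> w t + (1 + 2 * \<mu> * t) * \<xi>"
proof -
  let ?Z = "discounted_integral \<mu> w" and ?tj = "real j * \<Delta>"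
  have tj: "0 \<le> ?tj" using \<Delta> by simp
  let ?S = "\<Sum>k<j. exp (- \<mu> * (real k * \<Delta>)) * (w (real (Suc k) * \<Delta>) - w (real k * \<Delta>))"
  have "\<bar>?Z ?tj - ?S\<bar> \<le> 2 * \<mu> * ?tj * \<xi>"
    by (rule discounted_integral_grid_approx[OF \<mu> w w0 \<Delta>]) (use osc in auto)
  then have 1: "?S \<le> ?Z ?tj + 2 * \<mu> * ?tj * \<xi>" by (simp add: abs_le_iff)
  have "\<bar>?Z t - ?Z ?tj - exp (- \<mu> * ?tj) * (w t - w ?tj)\<bar> \<le> 2 * \<mu> * (t - ?tj) * \<xi>"
    by (rule discounted_integral_increment_approx[OF \<mu> w tj t(1)]) (use osc[of j] t in auto)
  then have 2: "?Z ?tj \<le> ?Z t - exp (- \<mu> * ?tj) * (w t - w ?tj) + 2 * \<mu> * (t - ?tj) * \<xi>"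
    by (simp add: abs_le_iff)
  have "\<bar>exp (- \<mu> * ?tj) * (w t - w ?tj)\<bar> \<le> \<xi>"
  proof -
    have "\<bar>exp (- \<mu> * ?tj) * (w t - w ?tj)\<bar> \<le> 1 * \<bar>w t - w ?tj\<bar>"
      unfolding abs_mult using \<mu> tj by (intro mult_right_mono) auto
    moreover have "\<bar>w t - w ?tj\<bar> \<le> \<xi>" using osc[of j t] t by simp
    ultimately show ?thesis by simp
  qed
  then have 3: "- exp (- \<mu> * ?tj) * (w t - w ?tj) \<le> \<xi>" by (simp add: abs_le_iff)
  have "2 * \<mu> * ?tj * \<xi> + 2 * \<mu> * (t - ?tj) * \<xi> = 2 * \<mu> * t * \<xi>" by (simp add: algebra_simps)
  then show ?thesis using 1 2 3 by (simp add: algebra_simps)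
qed

section \<open>Large deviations for crossing a barrier\<close>

text \<open>Continuity of the paths reduces the crossing event to countably many rational times.\<close>

lemma sets_exists_le_0_continuous:
  fixes f :: "real \<Rightarrow> 'a \<Rightarrow> real"
  assumes meas: "\<And>t. f t \<in> borel_measurable M"
    and cont: "\<And>\<omega>. \<omega> \<in> space M \<Longrightarrow> continuous_on {0..T} (\<lambda>t. f t \<omega>)" and T: "T > 0"
  shows "{\<omega> \<in> space M. \<exists>t\<in>{0..T}. f t \<omega> \<le> 0} \<in> sets M"
proof -
  note meas[measurable]
  define G where "G = {\<omega> \<in> space M. \<forall>n::nat. \<exists>r::rat. (0::real) \<le> of_rat r \<and> of_rat r \<le> T \<and>
      f (of_rat r) \<omega> < 1 / (real n + 1)}"
  have "G \<in> sets M" unfolding G_def by measurable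
  moreover have "{\<omega> \<in> space M. \<exists>t\<in>{0..T}. f t \<omega> \<le> 0} = G"
  proof (intro set_eqI iffI)
    fix \<omega> assume "\<omega> \<in> {\<omega> \<in> space M. \<exists>t\<in>{0..T}. f t \<omega> \<le> 0}"
    then obtain t where \<omega>: "\<omega> \<in> space M" and t: "t \<in> {0..T}" "f t \<omega> \<le> 0" by auto
    show "\<omega> \<in> G" unfolding G_def
    proof (intro CollectI conjI allI \<omega>)
      fix n :: nat
      have "1 / (real n + 1) > 0" by simp
      then obtain d where d: "d > 0"
        and dd: "\<And>y. y \<in> {0..T} \<Longrightarrow> dist y t < d \<Longrightarrow> dist (f y \<omega>) (f t \<omega>) < 1 / (real n + 1)"
        using cont[OF \<omega>] t unfolding continuous_on_iff by metis
      obtain q :: rat where q: "of_rat q \<in> {0..T}" "\<bar>of_rat q - t\<bar> < d"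
        using rat_near_in_interval[OF t(1) T d] .
      have "dist (f (of_rat q) \<omega>) (f t \<omega>) < 1 / (real n + 1)"
        using dd[OF q(1)] q(2) by (simp add: dist_real_def)
      then show "\<exists>r::rat. (0::real) \<le> of_rat r \<and> of_rat r \<le> T \<and> f (of_rat r) \<omega> < 1 / (real n + 1)"
        using q(1) t(2) by (intro exI[of _ q]) (auto simp: dist_real_def abs_less_iff)
    qed
  next
    fix \<omega> assume "\<omega> \<in> G"
    then have \<omega>: "\<omega> \<in> space M"
      and H: "\<And>n::nat. \<exists>r::rat. (0::real) \<le> of_rat r \<and> of_rat r \<le> T \<and> f (of_rat r) \<omega> < 1 / (real n + 1)"
      by (auto simp: G_def)
    obtain t where t: "t \<in> {0..T}" and tmin: "\<And>y. y \<in> {0..T} \<Longrightarrow> f t \<omega> \<le> f y \<omega>"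
      using continuous_attains_inf[OF compact_Icc _ cont[OF \<omega>]] T by auto
    have "f t \<omega> \<le> 0"
    proof (rule ccontr)
      assume "\<not> f t \<omega> \<le> 0"
      moreover obtain n :: nat where "1 / f t \<omega> < real n" using reals_Archimedean2 by blast
      ultimately have "1 / (real n + 1) < f t \<omega>" by (simp add: field_simps)
      moreover obtain r :: rat where "(0::real) \<le> of_rat r" "of_rat r \<le> T" "f (of_rat r) \<omega> < 1 / (real n + 1)"
        using H by blast
      moreover have "f t \<omega> \<le> f (of_rat r) \<omega>" using tmin calculation(2,3) by auto
      ultimately show False by linarith
    qed
    then show "\<omega> \<in> {\<omega> \<in> space M. \<exists>t\<in>{0..T}. f t \<omega> \<le> 0}" using t \<omega> by auto
  qed
  ultimately show ?thesis by simp
qed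

text \<open>After discounting, \<open>X\<^sub>t \<le> b(t)\<close> means that the centred Gaussian
  \<open>\<surd>\<epsilon> \<sigma> \<integral>\<^sub>0\<^sup>t e\<^sup>-\<^sup>\<mu>\<^sup>r dW\<^sub>r\<close>, of variance \<open>\<epsilon> \<sigma>\<^sup>2 noise_var t\<close>, falls below \<open>- gap t\<close>;
  \<open>rate t\<close> is the Gaussian cost of doing so at the single time \<open>t\<close>.\<close>

locale barrier_crossing = brownian_motion M W for M :: "'a measure" and W +
  fixes \<mu> \<sigma> x0 T :: real and b :: "real \<Rightarrow> real" and X :: "real \<Rightarrow> real \<Rightarrow> 'a \<Rightarrow> real"
  assumes mu_pos: "\<mu> > 0" and sigma_pos: "\<sigma> > 0" and T_pos: "T > 0"
    and continuous_b: "continuous_on {0..T} b"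
    and barrier_below: "\<And>t. t \<in> {0..T} \<Longrightarrow> exp (- \<mu> * t) * b t < x0"
    and sol: "\<And>\<epsilon>. \<epsilon> > 0 \<Longrightarrow> solves_linear_sde M W \<mu> \<sigma> \<epsilon> x0 (X \<epsilon>)"
begin

definition gap :: "real \<Rightarrow> real" where "gap t = x0 - exp (- \<mu> * t) * b t"

definition noise_var :: "real \<Rightarrow> real" where "noise_var t = (1 - exp (- 2 * \<mu> * t)) / (2 * \<mu>)"

definition rate :: "real \<Rightarrow> real" where "rate t = (gap t)\<^sup>2 / (2 * \<sigma>\<^sup>2 * noise_var t)"

definition crossing :: "real \<Rightarrow> 'a set" where
  "crossing \<epsilon> = {\<omega> \<in> space M. \<exists>t\<in>{0..T}. X \<epsilon> t \<omega> \<le> b t}"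

definition grid_sum :: "real \<Rightarrow> nat \<Rightarrow> 'a \<Rightarrow> real" where
  "grid_sum \<delta> j \<omega> = (\<Sum>k<j. exp (- \<mu> * (real k * \<delta>)) * (W (real (Suc k) * \<delta>) \<omega> - W (real k * \<delta>) \<omega>))"

lemma measurable_grid_sum[measurable]: "grid_sum \<delta> j \<in> borel_measurable M"
  unfolding grid_sum_def[abs_def] by measurable

lemma continuous_on_gap: "continuous_on {0..T} gap"
  unfolding gap_def[abs_def] by (intro continuous_intros continuous_b)

lemma gap_pos: "t \<in> {0..T} \<Longrightarrow> gap t > 0"
  using barrier_below by (simp add: gap_def)

lemma noise_var_pos: "t > 0 \<Longrightarrow> noise_var t > 0"
  using mu_pos by (simp add: noise_var_def)

lemma measurable_X[measurable]: "\<epsilon> > 0 \<Longrightarrow> X \<epsilon> t \<in> borel_measurable M"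
  using sol[of \<epsilon>] by (simp add: solves_linear_sde_def)

lemma continuous_on_X: "\<epsilon> > 0 \<Longrightarrow> \<omega> \<in> space M \<Longrightarrow> continuous_on {0..} (\<lambda>t. X \<epsilon> t \<omega>)"
  using sol[of \<epsilon>] by (simp add: solves_linear_sde_def)

lemma sets_crossing[measurable]: "\<epsilon> > 0 \<Longrightarrow> crossing \<epsilon> \<in> sets M"
proof -
  assume e: "\<epsilon> > 0"
  have "continuous_on {0..T} (\<lambda>t. X \<epsilon> t \<omega> - b t)" if "\<omega> \<in> space M" for \<omega>
    by (intro continuous_on_diff continuous_b continuous_on_subset[OF continuous_on_X[OF e that]]) auto
  then show ?thesis
    using sets_exists_le_0_continuous[of "\<lambda>t \<omega>. X \<epsilon> t \<omega> - b t" M T] T_pos e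
    by (simp add: crossing_def)
qed

lemma X_le_barrier_iff:
  assumes "\<epsilon> > 0" "\<omega> \<in> space M" "t \<ge> 0"
  shows "X \<epsilon> t \<omega> \<le> b t \<longleftrightarrow> discounted_integral \<mu> (\<lambda>s. W s \<omega>) t \<le> - gap t / (sqrt \<epsilon> * \<sigma>)"
proof -
  let ?s = "sqrt \<epsilon> * \<sigma>" and ?Z = "discounted_integral \<mu> (\<lambda>s. W s \<omega>) t" and ?e = "exp (- \<mu> * t)"
  have s: "?s > 0" using assms sigma_pos by simp
  have "exp (- \<mu> * t) * X \<epsilon> t \<omega> - x0 = ?s * ?Z"
  proof (rule linear_integral_equation_solution[OF mu_pos continuous_on_W[OF assms(2)]
        continuous_on_X[OF assms(1,2)] _ assms(3)])
    fix t :: real assume "t \<ge> 0"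
    then show "X \<epsilon> t \<omega> = x0 + integral {0..t} (\<lambda>s. \<mu> * X \<epsilon> s \<omega>) + sqrt \<epsilon> * \<sigma> * W t \<omega>"
      using sol[OF assms(1)] assms(2) by (simp add: solves_linear_sde_def)
  qed
  have "X \<epsilon> t \<omega> \<le> b t \<longleftrightarrow> ?e * X \<epsilon> t \<omega> \<le> ?e * b t" by simp
  also have "\<dots> \<longleftrightarrow> ?s * ?Z \<le> - gap t"
    using \<open>?e * X \<epsilon> t \<omega> - x0 = ?s * ?Z\<close> by (simp add: gap_def algebra_simps)
  also have "\<dots> \<longleftrightarrow> ?Z \<le> - gap t / ?s" using s by (simp add: field_simps)
  finally show ?thesis .
qed

lemma crossing_subset_osc_or_grid:
  assumes e: "\<epsilon> > 0" and N: "N > 0" and dN: "\<delta> * real N = T" and d: "\<delta> > 0"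
    and th: "0 < \<theta>" "2 * \<theta> < gap 0"
    and uc: "\<And>t t'. t \<in> {0..T} \<Longrightarrow> t' \<in> {0..T} \<Longrightarrow> \<bar>t - t'\<bar> \<le> \<delta> \<Longrightarrow> \<bar>gap t - gap t'\<bar> < \<theta>"
  shows "crossing \<epsilon> \<subseteq> (\<Union>k<N. osc_event (real k * \<delta>) \<delta> (\<theta> / ((1 + 2 * \<mu> * T) * (sqrt \<epsilon> * \<sigma>))))
     \<union> (\<Union>j\<in>{1..<N}. {\<omega> \<in> space M. grid_sum \<delta> j \<omega> \<le> - ((gap (real j * \<delta>) - 2 * \<theta>) / (sqrt \<epsilon> * \<sigma>))})"
proof
  fix \<omega> assume "\<omega> \<in> crossing \<epsilon>"
  then obtain t where \<omega>: "\<omega> \<in> space M" and t: "t \<in> {0..T}" and Xt: "X \<epsilon> t \<omega> \<le> b t"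
    by (auto simp: crossing_def)
  define s where "s = sqrt \<epsilon> * \<sigma>"
  define \<xi> where "\<xi> = \<theta> / ((1 + 2 * \<mu> * T) * s)"
  let ?Z = "discounted_integral \<mu> (\<lambda>r. W r \<omega>)"
  have s: "s > 0" using e sigma_pos by (simp add: s_def)
  have K: "1 + 2 * \<mu> * T > 0" using mu_pos T_pos by (simp add: add_pos_pos)
  have xi: "\<xi> > 0" using th s K by (simp add: \<xi>_def)
  have Zt: "?Z t \<le> - gap t / s"
    using X_le_barrier_iff[OF e \<omega>] t Xt by (simp add: s_def)
  show "\<omega> \<in> (\<Union>k<N. osc_event (real k * \<delta>) \<delta> (\<theta> / ((1 + 2 * \<mu> * T) * (sqrt \<epsilon> * \<sigma>))))
     \<union> (\<Union>j\<in>{1..<N}. {\<omega> \<in> space M. grid_sum \<delta> j \<omega> \<le> - ((gap (real j * \<delta>) - 2 * \<theta>) / (sqrt \<epsilon> * \<sigma>))})"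
  proof (cases "\<exists>k<N. \<omega> \<in> osc_event (real k * \<delta>) \<delta> \<xi>")
    case True then show ?thesis by (auto simp: \<xi>_def s_def)
  next
    case False
    obtain j where j: "j < N" "real j * \<delta> \<le> t" "t \<le> real j * \<delta> + \<delta>"
      using grid_cell_exists[OF N d dN t] .
    have "grid_sum \<delta> j \<omega> \<le> ?Z t + (1 + 2 * \<mu> * t) * \<xi>"
      unfolding grid_sum_def
    proof (rule grid_sum_le_discounted_integral[OF mu_pos continuous_on_W[OF \<omega>] W_zero[OF \<omega>] d _ j(2,3)])
      fix k r assume "k \<le> j" "real k * \<delta> \<le> r" "r \<le> real k * \<delta> + \<delta>"
      then show "\<bar>W r \<omega> - W (real k * \<delta>) \<omega>\<bar> \<le> \<xi>"
        using False j(1) d by (intro increment_le_outside_osc_event[OF \<omega>]) auto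
    qed
    moreover have "(1 + 2 * \<mu> * t) * \<xi> \<le> (1 + 2 * \<mu> * T) * \<xi>"
      using t mu_pos xi by (intro mult_right_mono) auto
    moreover have "(1 + 2 * \<mu> * T) * \<xi> = \<theta> / s" using K by (simp add: \<xi>_def)
    moreover have "gap (real j * \<delta>) - \<theta> < gap t"
      using uc[OF t, of "real j * \<delta>"] j t d by auto
    then have "(- gap t + \<theta>) / s \<le> (- (gap (real j * \<delta>) - 2 * \<theta>)) / s"
      using s by (intro divide_right_mono) auto
    then have "- gap t / s + \<theta> / s \<le> - ((gap (real j * \<delta>) - 2 * \<theta>) / s)"
      by (simp add: diff_divide_distrib)
    ultimately have Sj: "grid_sum \<delta> j \<omega> \<le> - ((gap (real j * \<delta>) - 2 * \<theta>) / s)"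
      using Zt by linarith
    have "j \<noteq> 0"
    proof
      assume "j = 0"
      then have "0 \<le> - ((gap 0 - 2 * \<theta>) / s)" using Sj by (simp add: grid_sum_def)
      then show False using th s by (simp add: field_simps)
    qed
    then show ?thesis using j(1) Sj \<omega> by (auto simp: s_def)
  qed
qed

lemma prob_grid_sum_le:
  assumes e: "\<epsilon> > 0" and d: "\<delta> > 0" and md: "\<mu> * \<delta> < 1" and j: "1 \<le> j" and H: "0 \<le> H"
  shows "prob {\<omega> \<in> space M. grid_sum \<delta> j \<omega> \<le> - (H / (sqrt \<epsilon> * \<sigma>))}
         \<le> exp (- (H\<^sup>2 * (1 - \<mu> * \<delta>) / (2 * \<sigma>\<^sup>2 * noise_var (real j * \<delta>))) / \<epsilon>)"
proof -
  define ts where "ts k = real k * \<delta>" for k :: nat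
  define c where "c k = exp (- \<mu> * (real k * \<delta>))" for k :: nat
  define v where "v = (\<Sum>k<j. (c k)\<^sup>2 * (ts (Suc k) - ts k))"
  define s where "s = sqrt \<epsilon> * \<sigma>"
  let ?\<tau> = "noise_var (real j * \<delta>)"
  have s: "s > 0" using e sigma_pos by (simp add: s_def)
  have veq: "v = (\<Sum>k<j. (exp (- \<mu> * (real k * \<delta>)))\<^sup>2 * \<delta>)"
    unfolding v_def c_def ts_def by (intro sum.cong) (auto simp: algebra_simps)
  have vpos: "v > 0" unfolding veq using j d by (intro sum_pos) (auto simp: lessThan_empty_iff)
  have "v \<le> ?\<tau> / (1 - \<mu> * \<delta>)"
    using grid_variance_le[OF mu_pos d md, of j] unfolding veq noise_var_def by simp
  then have "v * (1 - \<mu> * \<delta>) \<le> ?\<tau>" using md by (simp add: field_simps)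
  then have "(1 - \<mu> * \<delta>) / ?\<tau> \<le> 1 / v"
    using vpos noise_var_pos[of "real j * \<delta>"] j d by (simp add: field_simps)
  then have "H\<^sup>2 * (1 - \<mu> * \<delta>) / (2 * \<sigma>\<^sup>2 * ?\<tau>) / \<epsilon> \<le> (H / s)\<^sup>2 / (2 * v)"
    using e sigma_pos mult_left_mono[of "(1 - \<mu> * \<delta>) / ?\<tau>" "1 / v" "H\<^sup>2 / (2 * \<sigma>\<^sup>2 * \<epsilon>)"]
    by (simp add: s_def power_divide power_mult_distrib field_simps)
  moreover have "prob {\<omega> \<in> space M. (\<Sum>k<j. c k * (W (ts (Suc k)) \<omega> - W (ts k) \<omega>)) \<le> - (H / s)}
      \<le> exp (- (H / s)\<^sup>2 / (2 * v))"
    by (rule weighted_increments_chernoff[OF _ _ v_def vpos]) (use d H s in \<open>auto simp: ts_def\<close>)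
  ultimately show ?thesis
    unfolding grid_sum_def ts_def c_def s_def by (smt (verit) exp_le_cancel_iff minus_divide_left)
qed

lemma prob_crossing_le_grid_bound:
  assumes e: "\<epsilon> > 0" and N: "N > 0" and dN: "\<delta> * real N = T" and d: "\<delta> > 0" and md: "\<mu> * \<delta> < 1"
    and th: "0 < \<theta>" "\<And>t. t \<in> {0..T} \<Longrightarrow> 2 * \<theta> < gap t"
    and uc: "\<And>t t'. t \<in> {0..T} \<Longrightarrow> t' \<in> {0..T} \<Longrightarrow> \<bar>t - t'\<bar> \<le> \<delta> \<Longrightarrow> \<bar>gap t - gap t'\<bar> < \<theta>"
  shows "prob (crossing \<epsilon>)
    \<le> real N * (2 / std_normal_density 1 * exp (- (\<theta>\<^sup>2 / (2 * (1 + 2 * \<mu> * T)\<^sup>2 * \<sigma>\<^sup>2 * \<delta>)) / \<epsilon>))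
      + (\<Sum>j\<in>{1..<N}. exp (- ((gap (real j * \<delta>) - 2 * \<theta>)\<^sup>2 * (1 - \<mu> * \<delta>)
                                 / (2 * \<sigma>\<^sup>2 * noise_var (real j * \<delta>))) / \<epsilon>))"
proof -
  define Osc where "Osc k = osc_event (real k * \<delta>) \<delta> (\<theta> / ((1 + 2 * \<mu> * T) * (sqrt \<epsilon> * \<sigma>)))" for k
  define Grd where "Grd j = {\<omega> \<in> space M. grid_sum \<delta> j \<omega> \<le> - ((gap (real j * \<delta>) - 2 * \<theta>) / (sqrt \<epsilon> * \<sigma>))}"
    for j
  have [measurable]: "Osc k \<in> sets M" "Grd j \<in> sets M" for k j unfolding Osc_def Grd_def by measurable
  have jT: "real j * \<delta> \<in> {0..T}" if "j \<in> {1..<N}" for j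
    using mult_right_mono[of "real j" "real N" \<delta>] that d dN by (auto simp: mult.commute)
  have K: "1 + 2 * \<mu> * T > 0" using mu_pos T_pos by (simp add: add_pos_pos)
  have "prob (crossing \<epsilon>) \<le> prob ((\<Union>k<N. Osc k) \<union> (\<Union>j\<in>{1..<N}. Grd j))"
    unfolding Osc_def Grd_def
    by (rule finite_measure_mono[OF crossing_subset_osc_or_grid[OF e N dN d th(1) th(2) uc]])
       (use T_pos in \<open>auto simp: e\<close>)
  also have "\<dots> \<le> (\<Sum>k<N. prob (Osc k)) + (\<Sum>j\<in>{1..<N}. prob (Grd j))"
    using measure_Un_le[of "\<Union>k<N. Osc k" M "\<Union>j\<in>{1..<N}. Grd j"]
      finite_measure_subadditive_finite[of "{..<N}" Osc] finite_measure_subadditive_finite[of "{1..<N}" Grd]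
    by fastforce
  also have "\<dots> \<le> (\<Sum>k<N. 2 / std_normal_density 1 * exp (- (\<theta>\<^sup>2 / (2 * (1 + 2 * \<mu> * T)\<^sup>2 * \<sigma>\<^sup>2 * \<delta>)) / \<epsilon>))
      + (\<Sum>j\<in>{1..<N}. exp (- ((gap (real j * \<delta>) - 2 * \<theta>)\<^sup>2 * (1 - \<mu> * \<delta>)
                                 / (2 * \<sigma>\<^sup>2 * noise_var (real j * \<delta>))) / \<epsilon>))"
  proof (intro add_mono sum_mono)
    fix k show "prob (Osc k) \<le> 2 / std_normal_density 1 * exp (- (\<theta>\<^sup>2 / (2 * (1 + 2 * \<mu> * T)\<^sup>2 * \<sigma>\<^sup>2 * \<delta>)) / \<epsilon>)"
      unfolding Osc_def by (rule prob_osc_event_scaled_le) (use d th K e sigma_pos in auto)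
  next
    fix j assume j: "j \<in> {1..<N}"
    then show "prob (Grd j) \<le> exp (- ((gap (real j * \<delta>) - 2 * \<theta>)\<^sup>2 * (1 - \<mu> * \<delta>)
                                 / (2 * \<sigma>\<^sup>2 * noise_var (real j * \<delta>))) / \<epsilon>)"
      unfolding Grd_def using th(2)[OF jT[OF j]] j by (intro prob_grid_sum_le[OF e d md]) auto
  qed
  finally show ?thesis by simp
qed

text \<open>The grid is chosen so fine that the oscillation terms are negligible, and \<open>\<theta>\<close> so small
  that the discretised rates stay within a factor \<open>1 - \<eta>\<close> of \<open>rate\<close>.\<close>

lemma upper_bound_grid_exists:
  assumes Rmin: "\<And>t. t \<in> {0<..T} \<Longrightarrow> R \<le> rate t" and g: "\<gamma> > 0"
  obtains \<theta> \<delta> N where "0 < \<theta>" "\<And>t. t \<in> {0..T} \<Longrightarrow> 2 * \<theta> < gap t"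
    "\<And>t t'. t \<in> {0..T} \<Longrightarrow> t' \<in> {0..T} \<Longrightarrow> \<bar>t - t'\<bar> \<le> \<delta> \<Longrightarrow> \<bar>gap t - gap t'\<bar> < \<theta>"
    "N > 0" "\<delta> > 0" "\<delta> * real N = T" "\<mu> * \<delta> < 1"
    "R - \<gamma> / 2 \<le> \<theta>\<^sup>2 / (2 * (1 + 2 * \<mu> * T)\<^sup>2 * \<sigma>\<^sup>2 * \<delta>)"
    "\<And>j. j \<in> {1..<N} \<Longrightarrow>
       R - \<gamma> / 2 \<le> (gap (real j * \<delta>) - 2 * \<theta>)\<^sup>2 * (1 - \<mu> * \<delta>) / (2 * \<sigma>\<^sup>2 * noise_var (real j * \<delta>))"
proof -
  obtain t0 where t0: "t0 \<in> {0..T}" "\<And>t. t \<in> {0..T} \<Longrightarrow> gap t0 \<le> gap t"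
    using continuous_attains_inf[OF compact_Icc _ continuous_on_gap] T_pos by auto
  define hmin where "hmin = gap t0"
  have hm: "hmin > 0" "\<And>t. t \<in> {0..T} \<Longrightarrow> hmin \<le> gap t" using gap_pos t0 by (auto simp: hmin_def)
  define \<eta> where "\<eta> = min (1/2) (\<gamma> / (2 * (\<bar>R\<bar> + 1)))"
  have "0 < \<eta>" using g by (simp add: \<eta>_def abs_add_one_gt_zero)
  moreover have "\<eta> \<le> 1/2" unfolding \<eta>_def by (rule min.cobounded1)
  ultimately have \<eta>: "0 < \<eta>" "\<eta> \<le> 1/2" by blast+
  have \<eta>R: "R - \<gamma> / 2 \<le> (1 - \<eta>) * R"
  proof -
    have "\<eta> * \<bar>R\<bar> \<le> (\<gamma> / (2 * (\<bar>R\<bar> + 1))) * (\<bar>R\<bar> + 1)"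
      using g by (intro mult_mono) (auto simp: \<eta>_def)
    also have "\<dots> = \<gamma> / 2" by (simp add: field_simps)
    finally show ?thesis using mult_left_mono[OF abs_ge_self[of R] \<eta>(1)[THEN less_imp_le]]
      by (simp add: algebra_simps)
  qed
  define \<theta> where "\<theta> = hmin * \<eta> / 8"
  have "hmin * \<eta> \<le> hmin * (1/2)" using hm \<eta> by (intro mult_left_mono) auto
  then have "2 * \<theta> < hmin" using hm by (simp add: \<theta>_def)
  moreover have "0 < \<theta>" using hm \<eta> by (simp add: \<theta>_def)
  ultimately have \<theta>: "0 < \<theta>" "\<And>t. t \<in> {0..T} \<Longrightarrow> 2 * \<theta> < gap t"
    using hm(2) by (blast, fastforce)
  obtain d where d: "d > 0" and dd: "\<And>t t'. t \<in> {0..T} \<Longrightarrow> t' \<in> {0..T} \<Longrightarrow> dist t' t < d \<Longrightarrow> dist (gap t') (gap t) < \<theta>"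
    using compact_uniformly_continuous[OF continuous_on_gap compact_Icc] \<theta>(1)
    unfolding uniformly_continuous_on_def by metis
  define K where "K = 1 + 2 * \<mu> * T"
  have K: "K > 0" using mu_pos T_pos by (simp add: K_def add_pos_pos)
  have "0 < min d (min (\<eta> / (2 * \<mu>)) (\<theta>\<^sup>2 / (2 * K\<^sup>2 * \<sigma>\<^sup>2 * (\<bar>R\<bar> + 1))))"
    using d \<eta> mu_pos \<theta> K sigma_pos by (simp add: abs_add_one_gt_zero)
  then obtain N \<delta> where N: "N > 0" and \<delta>: "\<delta> > 0" "\<delta> * real N = T"
    and \<delta>0: "\<delta> < min d (min (\<eta> / (2 * \<mu>)) (\<theta>\<^sup>2 / (2 * K\<^sup>2 * \<sigma>\<^sup>2 * (\<bar>R\<bar> + 1))))"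
    using exists_fine_grid[OF T_pos] by blast
  have \<delta>\<eta>: "\<mu> * \<delta> \<le> \<eta> / 2" using \<delta>0 mu_pos by (simp add: field_simps)
  have uc: "\<bar>gap t - gap t'\<bar> < \<theta>" if "t \<in> {0..T}" "t' \<in> {0..T}" "\<bar>t - t'\<bar> \<le> \<delta>" for t t'
    using dd[OF that(2,1)] that(3) \<delta>0 by (simp add: dist_real_def)
  have "\<bar>R\<bar> + 1 < \<theta>\<^sup>2 / (2 * K\<^sup>2 * \<sigma>\<^sup>2 * \<delta>)"
    by (rule less_divide_swap) (use K sigma_pos \<delta> \<delta>0 in \<open>auto simp: abs_add_one_gt_zero\<close>)
  then have osc_term: "R - \<gamma> / 2 \<le> \<theta>\<^sup>2 / (2 * K\<^sup>2 * \<sigma>\<^sup>2 * \<delta>)" using g by linarith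
  have grid_term: "R - \<gamma> / 2 \<le> (gap (real j * \<delta>) - 2 * \<theta>)\<^sup>2 * (1 - \<mu> * \<delta>) / (2 * \<sigma>\<^sup>2 * noise_var (real j * \<delta>))"
    if j: "j \<in> {1..<N}" for j
  proof -
    let ?t = "real j * \<delta>"
    have t: "?t \<in> {0<..T}"
      using mult_right_mono[of "real j" "real N" \<delta>] j \<delta> by (auto simp: mult.commute)
    have \<tau>: "0 < 2 * \<sigma>\<^sup>2 * noise_var ?t" using noise_var_pos[of ?t] t sigma_pos by simp
    have "(1 - \<eta>) * (gap ?t)\<^sup>2 \<le> (gap ?t - 2 * \<theta>)\<^sup>2 * (1 - \<mu> * \<delta>)"
      using \<eta> gap_pos[of ?t] t hm(2)[of ?t] \<delta>\<eta>
      by (intro square_shrink_le) (auto simp: \<theta>_def mult.commute intro: mult_left_mono)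
    then have "(1 - \<eta>) * rate ?t \<le> (gap ?t - 2 * \<theta>)\<^sup>2 * (1 - \<mu> * \<delta>) / (2 * \<sigma>\<^sup>2 * noise_var ?t)"
      unfolding rate_def using \<tau> by (simp add: divide_right_mono)
    moreover have "(1 - \<eta>) * R \<le> (1 - \<eta>) * rate ?t" using Rmin[OF t] \<eta> by (intro mult_left_mono) auto
    ultimately show ?thesis using \<eta>R by linarith
  qed
  have md: "\<mu> * \<delta> < 1" using \<delta>\<eta> \<eta> by simp
  show thesis by (rule that[OF \<theta> uc N \<delta> md osc_term[unfolded K_def] grid_term])
qed

lemma crossing_upper_bound:
  assumes Rmin: "\<And>t. t \<in> {0<..T} \<Longrightarrow> R \<le> rate t" and g: "\<gamma> > 0"
  shows "eventually (\<lambda>\<epsilon>. prob (crossing \<epsilon>) \<le> exp (- (R - \<gamma>) / \<epsilon>)) (at_right 0)"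
proof -
  obtain \<theta> \<delta> N where \<theta>: "0 < \<theta>" "\<And>t. t \<in> {0..T} \<Longrightarrow> 2 * \<theta> < gap t"
    and uc: "\<And>t t'. t \<in> {0..T} \<Longrightarrow> t' \<in> {0..T} \<Longrightarrow> \<bar>t - t'\<bar> \<le> \<delta> \<Longrightarrow> \<bar>gap t - gap t'\<bar> < \<theta>"
    and N: "N > 0" and \<delta>: "\<delta> > 0" "\<delta> * real N = T" "\<mu> * \<delta> < 1"
    and osc_rate: "R - \<gamma> / 2 \<le> \<theta>\<^sup>2 / (2 * (1 + 2 * \<mu> * T)\<^sup>2 * \<sigma>\<^sup>2 * \<delta>)"
    and grid_rate: "\<And>j. j \<in> {1..<N} \<Longrightarrow>
       R - \<gamma> / 2 \<le> (gap (real j * \<delta>) - 2 * \<theta>)\<^sup>2 * (1 - \<mu> * \<delta>) / (2 * \<sigma>\<^sup>2 * noise_var (real j * \<delta>))"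
    using upper_bound_grid_exists[OF Rmin g] by blast
  define ee where "ee \<epsilon> = exp (- (R - \<gamma> / 2) / \<epsilon>)" for \<epsilon>
  define C where "C = real N * (2 / std_normal_density 1) + real N"
  have "eventually (\<lambda>\<epsilon>. C * exp (- (\<gamma> / 2) / \<epsilon>) \<le> 1) (at_right 0)"
    by (rule eventually_mult_exp_neg_divide_le_1) (use g in simp)
  moreover have "eventually (\<lambda>\<epsilon>. \<epsilon> > (0::real)) (at_right 0)" by (simp add: eventually_at_right_less)
  ultimately show ?thesis
  proof eventually_elim
    case (elim \<epsilon>)
    have "prob (crossing \<epsilon>)
      \<le> real N * (2 / std_normal_density 1 * exp (- (\<theta>\<^sup>2 / (2 * (1 + 2 * \<mu> * T)\<^sup>2 * \<sigma>\<^sup>2 * \<delta>)) / \<epsilon>))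
        + (\<Sum>j\<in>{1..<N}. exp (- ((gap (real j * \<delta>) - 2 * \<theta>)\<^sup>2 * (1 - \<mu> * \<delta>)
                                   / (2 * \<sigma>\<^sup>2 * noise_var (real j * \<delta>))) / \<epsilon>))"
      by (rule prob_crossing_le_grid_bound[OF elim(2) N \<delta>(2) \<delta>(1) \<delta>(3) \<theta> uc])
    also have "\<dots> \<le> real N * (2 / std_normal_density 1 * ee \<epsilon>) + (\<Sum>j\<in>{1..<N}. ee \<epsilon>)"
    proof (intro add_mono sum_mono mult_left_mono)
      show "exp (- (\<theta>\<^sup>2 / (2 * (1 + 2 * \<mu> * T)\<^sup>2 * \<sigma>\<^sup>2 * \<delta>)) / \<epsilon>) \<le> ee \<epsilon>"
        unfolding ee_def using osc_rate elim(2) by (rule exp_neg_divide_mono)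
      fix j assume "j \<in> {1..<N}"
      show "exp (- ((gap (real j * \<delta>) - 2 * \<theta>)\<^sup>2 * (1 - \<mu> * \<delta>) / (2 * \<sigma>\<^sup>2 * noise_var (real j * \<delta>))) / \<epsilon>)
          \<le> ee \<epsilon>"
        unfolding ee_def using grid_rate[OF \<open>j \<in> {1..<N}\<close>] elim(2) by (rule exp_neg_divide_mono)
    qed (use normal_density_pos[of 1 0 1] in auto)
    also have "\<dots> \<le> C * ee \<epsilon>"
    proof -
      have "real (N - 1) * ee \<epsilon> \<le> real N * ee \<epsilon>" unfolding ee_def by (intro mult_right_mono) auto
      then show ?thesis unfolding C_def by (simp add: distrib_right)
    qed
    also have "C * ee \<epsilon> = (C * exp (- (\<gamma> / 2) / \<epsilon>)) * exp (- (R - \<gamma>) / \<epsilon>)"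
      unfolding ee_def using elim(2) by (simp add: exp_add[symmetric] field_simps)
    also have "\<dots> \<le> exp (- (R - \<gamma>) / \<epsilon>)" using elim(1) by (simp add: mult_left_le_one_le)
    finally show ?case .
  qed
qed

text \<open>Paths whose increments follow the optimal profile \<open>\<propto> e\<^sup>-\<^sup>\<mu>\<^sup>r\<close> closely enough to push
  the discounted noise below \<open>- gap L\<close> at time \<open>L\<close>, and which do not oscillate in between.\<close>

lemma forced_paths_subset_crossing:
  assumes e: "\<epsilon> > 0" and L: "L \<in> {0<..T}" and n: "n > 0" and D: "\<Delta> * real n = L" and th: "\<theta> > 0"
    and tn: "\<tau>n = (\<Sum>k<n. (exp (- \<mu> * (real k * \<Delta>)))\<^sup>2 * \<Delta>)" "\<tau>n > 0"
  shows "{\<omega> \<in> space M. \<forall>k<n. W (real (Suc k) * \<Delta>) \<omega> - W (real k * \<Delta>) \<omega>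
            \<le> - ((gap L + \<theta>) * exp (- \<mu> * (real k * \<Delta>)) * \<Delta> / (\<tau>n * (sqrt \<epsilon> * \<sigma>)))}
         - (\<Union>k<n. osc_event (real k * \<Delta>) \<Delta> (\<theta> / (2 * \<mu> * L * (sqrt \<epsilon> * \<sigma>)))) \<subseteq> crossing \<epsilon>"
proof
  fix \<omega>
  define s where "s = sqrt \<epsilon> * \<sigma>"
  define \<xi> where "\<xi> = \<theta> / (2 * \<mu> * L * s)"
  define a where "a k = (gap L + \<theta>) * exp (- \<mu> * (real k * \<Delta>)) * \<Delta> / (\<tau>n * s)" for k
  assume "\<omega> \<in> {\<omega> \<in> space M. \<forall>k<n. W (real (Suc k) * \<Delta>) \<omega> - W (real k * \<Delta>) \<omega>
            \<le> - ((gap L + \<theta>) * exp (- \<mu> * (real k * \<Delta>)) * \<Delta> / (\<tau>n * (sqrt \<epsilon> * \<sigma>)))}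
         - (\<Union>k<n. osc_event (real k * \<Delta>) \<Delta> (\<theta> / (2 * \<mu> * L * (sqrt \<epsilon> * \<sigma>))))"
  then have \<omega>: "\<omega> \<in> space M" and Y: "\<And>k. k < n \<Longrightarrow> W (real (Suc k) * \<Delta>) \<omega> - W (real k * \<Delta>) \<omega> \<le> - a k"
    and no: "\<And>k. k < n \<Longrightarrow> \<omega> \<notin> osc_event (real k * \<Delta>) \<Delta> \<xi>"
    by (auto simp: \<xi>_def s_def a_def)
  have s: "s > 0" using e sigma_pos by (simp add: s_def)
  have Lp: "L > 0" "L \<le> T" using L by auto
  have Dp: "\<Delta> > 0" using D Lp n by (metis mult_pos_pos of_nat_0_less_iff zero_less_mult_pos2)
  let ?Z = "discounted_integral \<mu> (\<lambda>s. W s \<omega>)"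
  have "\<bar>?Z (real n * \<Delta>) - grid_sum \<Delta> n \<omega>\<bar> \<le> 2 * \<mu> * (real n * \<Delta>) * \<xi>"
    unfolding grid_sum_def
    by (rule discounted_integral_grid_approx[OF mu_pos continuous_on_W[OF \<omega>] W_zero[OF \<omega>] Dp])
       (use no Dp in \<open>auto intro: increment_le_outside_osc_event[OF \<omega>]\<close>)
  moreover have "real n * \<Delta> = L" using D by (simp add: mult.commute)
  moreover have "2 * \<mu> * L * \<xi> = \<theta> / s" using mu_pos Lp s by (simp add: \<xi>_def)
  ultimately have ZS: "?Z L \<le> grid_sum \<Delta> n \<omega> + \<theta> / s" by (simp add: abs_le_iff)
  have "grid_sum \<Delta> n \<omega> \<le> (\<Sum>k<n. exp (- \<mu> * (real k * \<Delta>)) * (- a k))"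
    unfolding grid_sum_def using Y by (intro sum_mono mult_left_mono) auto
  also have "\<dots> = - ((gap L + \<theta>) / (\<tau>n * s) * (\<Sum>k<n. (exp (- \<mu> * (real k * \<Delta>)))\<^sup>2 * \<Delta>))"
    unfolding a_def sum_distrib_left sum_negf[symmetric]
    by (intro sum.cong) (auto simp: power2_eq_square field_simps)
  also have "\<dots> = - ((gap L + \<theta>) / s)" unfolding tn(1)[symmetric] using tn(2) by simp
  finally have "?Z L \<le> - gap L / s"
    using ZS by (simp add: add_divide_distrib diff_divide_distrib)
  then have "X \<epsilon> L \<omega> \<le> b L" using X_le_barrier_iff[OF e \<omega>, of L] Lp by (simp add: s_def)
  then show "\<omega> \<in> crossing \<epsilon>" using \<omega> Lp by (auto simp: crossing_def)
qed

lemma prob_crossing_ge_grid_bound: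
  assumes e: "\<epsilon> > 0" and L: "L \<in> {0<..T}" and n: "n > 0" and D: "\<Delta> * real n = L" and th: "\<theta> > 0"
    and tn: "\<tau>n = (\<Sum>k<n. (exp (- \<mu> * (real k * \<Delta>)))\<^sup>2 * \<Delta>)" "\<tau>n > 0"
  defines "B k \<equiv> (gap L + \<theta>) * exp (- \<mu> * (real k * \<Delta>)) * \<Delta> / (\<tau>n * \<sigma>)"
  shows "exp (- ((\<Sum>k<n. (B k + sqrt (\<epsilon> * \<Delta>))\<^sup>2 / (2 * \<Delta>)) + \<epsilon> * real n * ln (sqrt (2 * pi))) / \<epsilon>)
         - real n * (2 / std_normal_density 1 * exp (- (\<theta>\<^sup>2 / (2 * (2 * \<mu> * L)\<^sup>2 * \<sigma>\<^sup>2 * \<Delta>)) / \<epsilon>))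
         \<le> prob (crossing \<epsilon>)"
proof -
  have Lp: "L > 0" "L \<le> T" using L by auto
  have Dp: "\<Delta> > 0" using D Lp n by (metis mult_pos_pos of_nat_0_less_iff zero_less_mult_pos2)
  define a where "a k = B k / sqrt \<epsilon>" for k
  have a0: "a k \<ge> 0" for k
    using gap_pos[of L] Lp th Dp tn(2) sigma_pos e by (simp add: a_def B_def)
  define A where "A = {\<omega> \<in> space M. \<forall>k<n. W (real (Suc k) * \<Delta>) \<omega> - W (real k * \<Delta>) \<omega> \<le> - a k}"
  define Oc where "Oc = (\<Union>k<n. osc_event (real k * \<Delta>) \<Delta> (\<theta> / (2 * \<mu> * L * (sqrt \<epsilon> * \<sigma>))))"
  have [measurable]: "A \<in> sets M" "Oc \<in> sets M" unfolding A_def Oc_def by measurable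
  have "A - Oc \<subseteq> crossing \<epsilon>"
    using forced_paths_subset_crossing[OF e L n D th tn]
    unfolding A_def Oc_def a_def B_def by (simp add: field_simps)
  then have "prob A - prob Oc \<le> prob (crossing \<epsilon>)"
    using finite_measure_mono[of "A - Oc" "crossing \<epsilon>"] measure_Un_le[of "A - Oc" M Oc]
      finite_measure_mono[of A "(A - Oc) \<union> Oc"] e by fastforce
  moreover have "exp (- ((\<Sum>k<n. (B k + sqrt (\<epsilon> * \<Delta>))\<^sup>2 / (2 * \<Delta>)) + \<epsilon> * real n * ln (sqrt (2 * pi))) / \<epsilon>)
      \<le> prob A"
  proof -
    have "(a k + sqrt \<Delta>)\<^sup>2 / (2 * \<Delta>) = ((B k + sqrt (\<epsilon> * \<Delta>))\<^sup>2 / (2 * \<Delta>)) / \<epsilon>" for k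
    proof -
      have "a k + sqrt \<Delta> = (B k + sqrt (\<epsilon> * \<Delta>)) / sqrt \<epsilon>"
        using e by (simp add: a_def real_sqrt_mult add_divide_distrib)
      then show ?thesis using e by (simp add: power_divide)
    qed
    then have "- ((\<Sum>k<n. (B k + sqrt (\<epsilon> * \<Delta>))\<^sup>2 / (2 * \<Delta>)) + \<epsilon> * real n * ln (sqrt (2 * pi))) / \<epsilon>
        = - (\<Sum>k<n. (a k + sqrt \<Delta>)\<^sup>2 / (2 * \<Delta>)) - real n * ln (sqrt (2 * pi))"
      using e by (simp add: sum_divide_distrib[symmetric] field_simps)
    moreover have "exp (real n * ln (sqrt (2 * pi))) = (sqrt (2 * pi)) ^ n"
      by (simp add: exp_of_nat_mult)
    ultimately have "exp (- ((\<Sum>k<n. (B k + sqrt (\<epsilon> * \<Delta>))\<^sup>2 / (2 * \<Delta>)) + \<epsilon> * real n * ln (sqrt (2 * pi))) / \<epsilon>)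
        = exp (- (\<Sum>k<n. (a k + sqrt \<Delta>)\<^sup>2 / (2 * \<Delta>))) / (sqrt (2 * pi)) ^ n"
      by (simp add: exp_diff)
    also have "\<dots> \<le> prob A" unfolding A_def by (rule prob_all_increments_le_ge[OF Dp n a0])
    finally show ?thesis .
  qed
  moreover have "prob Oc \<le> real n * (2 / std_normal_density 1 * exp (- (\<theta>\<^sup>2 / (2 * (2 * \<mu> * L)\<^sup>2 * \<sigma>\<^sup>2 * \<Delta>)) / \<epsilon>))"
  proof -
    have "prob Oc \<le> (\<Sum>k<n. prob (osc_event (real k * \<Delta>) \<Delta> (\<theta> / (2 * \<mu> * L * (sqrt \<epsilon> * \<sigma>)))))"
      unfolding Oc_def by (rule finite_measure_subadditive_finite) auto
    also have "\<dots> \<le> (\<Sum>k<n. 2 / std_normal_density 1 * exp (- (\<theta>\<^sup>2 / (2 * (2 * \<mu> * L)\<^sup>2 * \<sigma>\<^sup>2 * \<Delta>)) / \<epsilon>))"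
      by (intro sum_mono prob_osc_event_scaled_le) (use Dp th mu_pos Lp e sigma_pos in auto)
    finally show ?thesis by simp
  qed
  ultimately show ?thesis by linarith
qed

lemma crossing_lower_bound:
  assumes L: "L \<in> {0<..T}" and g: "\<gamma> > 0"
  shows "eventually (\<lambda>\<epsilon>. exp (- (rate L + \<gamma>) / \<epsilon>) \<le> prob (crossing \<epsilon>)) (at_right 0)"
proof -
  let ?R = "rate L"
  have Lp: "L > 0" "L \<le> T" using L by auto
  have hL: "gap L > 0" using gap_pos[of L] Lp by simp
  have \<tau>L: "noise_var L > 0" using noise_var_pos Lp by simp
  have R0: "?R \<ge> 0" unfolding rate_def using \<tau>L by simp
  define \<theta> where "\<theta> = min 1 (\<gamma> * \<sigma>\<^sup>2 * noise_var L / (2 * (2 * gap L + 1)))"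
  have \<theta>: "\<theta> > 0" using g sigma_pos \<tau>L hL by (simp add: \<theta>_def)
  have \<theta>_rate: "(gap L + \<theta>)\<^sup>2 / (2 * \<sigma>\<^sup>2 * noise_var L) \<le> ?R + \<gamma> / 4"
    unfolding rate_def \<theta>_def by (rule square_add_min_le[OF hL \<tau>L sigma_pos g])
  have "0 < \<theta>\<^sup>2 / (2 * (2 * \<mu> * L)\<^sup>2 * \<sigma>\<^sup>2 * (?R + \<gamma> + 1))"
    using \<theta> mu_pos Lp sigma_pos R0 g by (simp add: add_pos_nonneg)
  then obtain n \<Delta> where n: "n > 0" and \<Delta>: "\<Delta> > 0" "\<Delta> * real n = L"
    and \<Delta>0: "\<Delta> < \<theta>\<^sup>2 / (2 * (2 * \<mu> * L)\<^sup>2 * \<sigma>\<^sup>2 * (?R + \<gamma> + 1))"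
    using exists_fine_grid[OF Lp(1)] by blast
  have "?R + \<gamma> + 1 < \<theta>\<^sup>2 / (2 * (2 * \<mu> * L)\<^sup>2 * \<sigma>\<^sup>2 * \<Delta>)"
    by (rule less_divide_swap) (use mu_pos Lp sigma_pos R0 g \<Delta> \<Delta>0 in auto)
  then have osc_rate: "?R + \<gamma> \<le> \<theta>\<^sup>2 / (2 * (2 * \<mu> * L)\<^sup>2 * \<sigma>\<^sup>2 * \<Delta>)" by linarith
  define \<tau>n where "\<tau>n = (\<Sum>k<n. (exp (- \<mu> * (real k * \<Delta>)))\<^sup>2 * \<Delta>)"
  have \<tau>nL: "noise_var L \<le> \<tau>n"
    using grid_variance_ge[OF mu_pos \<Delta>(1), of n] \<Delta>(2) by (simp add: \<tau>n_def noise_var_def mult.commute)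
  have \<tau>n: "\<tau>n > 0" using \<tau>nL \<tau>L by simp
  define B where "B k = (gap L + \<theta>) * exp (- \<mu> * (real k * \<Delta>)) * \<Delta> / (\<tau>n * \<sigma>)" for k
  define G where "G \<epsilon> = (\<Sum>k<n. (B k + sqrt (\<epsilon> * \<Delta>))\<^sup>2 / (2 * \<Delta>)) + \<epsilon> * real n * ln (sqrt (2 * pi))" for \<epsilon>
  have "(\<Sum>k<n. (B k)\<^sup>2 / (2 * \<Delta>)) = (gap L + \<theta>)\<^sup>2 / (2 * \<sigma>\<^sup>2 * \<tau>n)"
    unfolding B_def by (rule sum_square_optimal_profile[OF \<Delta>(1) sigma_pos \<tau>n_def \<tau>n])
  also have "\<dots> \<le> (gap L + \<theta>)\<^sup>2 / (2 * \<sigma>\<^sup>2 * noise_var L)"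
    using \<tau>nL \<tau>L sigma_pos by (intro divide_left_mono) auto
  finally have G0: "(\<Sum>k<n. (B k)\<^sup>2 / (2 * \<Delta>)) \<le> ?R + \<gamma> / 4" using \<theta>_rate by linarith
  have "(G \<longlongrightarrow> (\<Sum>k<n. (B k + sqrt (0 * \<Delta>))\<^sup>2 / (2 * \<Delta>)) + 0 * real n * ln (sqrt (2 * pi))) (at_right 0)"
    unfolding G_def[abs_def] using \<Delta>(1) by (intro tendsto_intros) auto
  then have "eventually (\<lambda>\<epsilon>. G \<epsilon> < ?R + \<gamma> / 2) (at_right 0)"
    using G0 g by (intro order_tendstoD(2)) auto
  moreover have "eventually (\<lambda>\<epsilon>. (real n * (2 / std_normal_density 1) + 1) * exp (- (\<gamma> / 2) / \<epsilon>) \<le> 1) (at_right 0)"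
    by (rule eventually_mult_exp_neg_divide_le_1) (use g in simp)
  moreover have "eventually (\<lambda>\<epsilon>. \<epsilon> > (0::real)) (at_right 0)" by (simp add: eventually_at_right_less)
  ultimately show ?thesis
  proof eventually_elim
    case (elim \<epsilon>)
    define q where "q = exp (- (?R + \<gamma>) / \<epsilon>)"
    define C where "C = real n * (2 / std_normal_density 1)"
    have "exp (- (?R + \<gamma> / 2) / \<epsilon>) - C * q \<le> exp (- G \<epsilon> / \<epsilon>) - C * q"
      using elim by (intro diff_right_mono exp_neg_divide_mono) auto
    also have "\<dots> \<le> exp (- G \<epsilon> / \<epsilon>) - real n * (2 / std_normal_density 1
                    * exp (- (\<theta>\<^sup>2 / (2 * (2 * \<mu> * L)\<^sup>2 * \<sigma>\<^sup>2 * \<Delta>)) / \<epsilon>))"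
    proof -
      have "exp (- (\<theta>\<^sup>2 / (2 * (2 * \<mu> * L)\<^sup>2 * \<sigma>\<^sup>2 * \<Delta>)) / \<epsilon>) \<le> q"
        unfolding q_def using osc_rate elim(3) by (rule exp_neg_divide_mono)
      then have "real n * (2 / std_normal_density 1 * exp (- (\<theta>\<^sup>2 / (2 * (2 * \<mu> * L)\<^sup>2 * \<sigma>\<^sup>2 * \<Delta>)) / \<epsilon>))
          \<le> real n * (2 / std_normal_density 1 * q)"
        using normal_density_pos[of 1 0 1] by (intro mult_left_mono) auto
      then show ?thesis by (simp add: C_def)
    qed
    also have "\<dots> \<le> prob (crossing \<epsilon>)"
      unfolding G_def B_def by (rule prob_crossing_ge_grid_bound[OF elim(3) L n \<Delta>(2) \<theta> \<tau>n_def \<tau>n])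
    finally have lower: "exp (- (?R + \<gamma> / 2) / \<epsilon>) - C * q \<le> prob (crossing \<epsilon>)" .
    have "exp (- (?R + \<gamma> / 2) / \<epsilon>) = q / exp (- (\<gamma> / 2) / \<epsilon>)"
      unfolding q_def using elim(3) by (simp add: exp_diff[symmetric] field_simps)
    moreover have "(C + 1) * q * exp (- (\<gamma> / 2) / \<epsilon>) \<le> q"
      using mult_left_mono[OF elim(2), of q] by (simp add: C_def q_def mult_ac)
    ultimately have "(C + 1) * q \<le> exp (- (?R + \<gamma> / 2) / \<epsilon>)" by (simp add: le_divide_eq)
    then show ?case using lower by (simp add: q_def algebra_simps)
  qed
qed

lemma crossing_ldp:
  assumes L: "L \<in> {0<..T}" and Lmin: "\<And>t. t \<in> {0<..T} \<Longrightarrow> rate L \<le> rate t"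
  shows "((\<lambda>\<epsilon>. \<epsilon> * ln (prob (crossing \<epsilon>))) \<longlongrightarrow> - rate L) (at_right 0)"
proof (rule tendsto_mult_ln_of_exp_bounds)
  fix \<gamma> :: real assume g: "\<gamma> > 0"
  have "eventually (\<lambda>\<epsilon>. exp (- (rate L + \<gamma>) / \<epsilon>) \<le> prob (crossing \<epsilon>)) (at_right 0)"
    by (rule crossing_lower_bound[OF L g])
  moreover have "eventually (\<lambda>\<epsilon>. prob (crossing \<epsilon>) \<le> exp (- (rate L - \<gamma>) / \<epsilon>)) (at_right 0)"
    by (rule crossing_upper_bound[OF Lmin g])
  ultimately show "eventually (\<lambda>\<epsilon>. exp (- (rate L + \<gamma>) / \<epsilon>) \<le> prob (crossing \<epsilon>)
      \<and> prob (crossing \<epsilon>) \<le> exp (- (rate L - \<gamma>) / \<epsilon>)) (at_right 0)"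
    by eventually_elim auto
qed

lemma rate_exponential_barrier:
  assumes b: "\<And>t. b t = c * exp (\<gamma> * t)" and t: "t > 0"
  shows "rate t = rate_fn \<mu> \<sigma> x0 c \<gamma> t"
proof -
  define E where "E = exp (\<mu> * t)"
  have E: "E > 1" using mu_pos t by (simp add: E_def)
  have e1: "exp (- \<mu> * t) = 1 / E" by (simp add: E_def exp_minus field_simps)
  have e2: "exp (- 2 * \<mu> * t) = 1 / (E * E)" by (simp add: E_def exp_add[symmetric] exp_minus field_simps)
  have e3: "exp (2 * \<mu> * t) = E * E" by (simp add: E_def exp_add[symmetric])
  have hE: "c * exp (\<gamma> * t) - x0 * E = - E * gap t"
    unfolding gap_def e1 b using E by (simp add: field_simps)
  have D: "E * E - 1 > 0" using E by (simp add: less_1_mult)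
  have "rate t = (gap t)\<^sup>2 / (2 * \<sigma>\<^sup>2 * ((1 - 1 / (E * E)) / (2 * \<mu>)))"
    unfolding rate_def noise_var_def e2 ..
  also have "\<dots> = \<mu> / \<sigma>\<^sup>2 * (- E * gap t)\<^sup>2 / (E * E - 1)"
    using D E mu_pos sigma_pos by (simp add: power2_eq_square field_simps)
  also have "\<dots> = rate_fn \<mu> \<sigma> x0 c \<gamma> t"
    unfolding rate_fn_def e3 E_def[symmetric] hE ..
  finally show ?thesis .
qed

end

section \<open>The rate function of an exponential barrier\<close>

text \<open>The derivative of \<open>rate_fn\<close> has the sign of \<open>(c e\<^sup>\<gamma>\<^sup>t - x\<^sub>0 e\<^sup>\<mu>\<^sup>t) rate_fn_slope\<close>. For the
  barriers \<open>V\<close> and \<open>U\<close> the slope is \<open>\<mu> (x\<^sub>0 - c \<phi>(t))\<close>, which is where the equations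
  defining \<open>t\<^sup>o\<^sub>V\<close> and \<open>t\<^sup>o\<^sub>U\<close> come from.\<close>

definition rate_fn_slope :: "real \<Rightarrow> real \<Rightarrow> real \<Rightarrow> real \<Rightarrow> real \<Rightarrow> real" where
  "rate_fn_slope \<mu> x0 c \<gamma> t = c * (\<gamma> - \<mu>) * exp (\<gamma> * t) * exp (\<mu> * t) - c * \<gamma> * exp (\<gamma> * t) / exp (\<mu> * t) + x0 * \<mu>"

lemma rate_fn_has_derivative:
  fixes \<mu> \<sigma> x0 c \<gamma> t :: real
  assumes mu: "\<mu> > 0" and t: "t > 0"
  shows "DERIV (rate_fn \<mu> \<sigma> x0 c \<gamma>) t :>
    2 * \<mu> / \<sigma>\<^sup>2 * exp (\<mu> * t) / (exp (2 * \<mu> * t) - 1)\<^sup>2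
      * ((c * exp (\<gamma> * t) - x0 * exp (\<mu> * t)) * rate_fn_slope \<mu> x0 c \<gamma> t)"
proof -
  define A where "A t = c * exp (\<gamma> * t) - x0 * exp (\<mu> * t)" for t
  define D where "D t = exp (2 * \<mu> * t) - 1" for t
  have dA: "DERIV A t :> c * (exp (\<gamma> * t) * \<gamma>) - x0 * (exp (\<mu> * t) * \<mu>)"
    unfolding A_def by (intro DERIV_diff DERIV_cmult DERIV_fun_exp DERIV_cmult_Id)
  have dD: "DERIV D t :> exp (2 * \<mu> * t) * (2 * \<mu>) - 0"
    unfolding D_def by (intro DERIV_diff DERIV_fun_exp DERIV_cmult_Id DERIV_const)
  have Dnz: "D t \<noteq> 0" using mu t by (simp add: D_def)
  have dAA: "DERIV (\<lambda>t. A t * A t) t :> (c * (exp (\<gamma> * t) * \<gamma>) - x0 * (exp (\<mu> * t) * \<mu>)) * A t + (c * (exp (\<gamma> * t) * \<gamma>) - x0 * (exp (\<mu> * t) * \<mu>)) * A t"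
    by (rule DERIV_mult[OF dA dA])
  have dq: "DERIV (\<lambda>t. A t * A t / D t) t :>
      (((c * (exp (\<gamma> * t) * \<gamma>) - x0 * (exp (\<mu> * t) * \<mu>)) * A t + (c * (exp (\<gamma> * t) * \<gamma>) - x0 * (exp (\<mu> * t) * \<mu>)) * A t) * D t
        - (exp (2 * \<mu> * t) * (2 * \<mu>) - 0) * (A t * A t)) / (D t ^ Suc (Suc 0))"
    by (rule DERIV_quotient[OF dAA dD Dnz])
  have dc: "DERIV (\<lambda>t. (\<mu> / \<sigma>\<^sup>2) * (A t * A t / D t)) t :>
      (\<mu> / \<sigma>\<^sup>2) * ((((c * (exp (\<gamma> * t) * \<gamma>) - x0 * (exp (\<mu> * t) * \<mu>)) * A t + (c * (exp (\<gamma> * t) * \<gamma>) - x0 * (exp (\<mu> * t) * \<mu>)) * A t) * D t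
        - (exp (2 * \<mu> * t) * (2 * \<mu>) - 0) * (A t * A t)) / (D t ^ Suc (Suc 0)))"
    by (rule DERIV_cmult[OF dq])
  have feq: "rate_fn \<mu> \<sigma> x0 c \<gamma> = (\<lambda>t. (\<mu> / \<sigma>\<^sup>2) * (A t * A t / D t))"
    by (simp add: fun_eq_iff rate_fn_def A_def D_def power2_eq_square)
  have e2: "exp (2 * \<mu> * t) = exp (\<mu> * t) * exp (\<mu> * t)" by (simp add: exp_add[symmetric])
  have num: "(((c * (exp (\<gamma> * t) * \<gamma>) - x0 * (exp (\<mu> * t) * \<mu>)) * A t + (c * (exp (\<gamma> * t) * \<gamma>) - x0 * (exp (\<mu> * t) * \<mu>)) * A t) * D t
        - (exp (2 * \<mu> * t) * (2 * \<mu>) - 0) * (A t * A t))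
      = 2 * (c * exp (\<gamma> * t) - x0 * exp (\<mu> * t)) * exp (\<mu> * t) * rate_fn_slope \<mu> x0 c \<gamma> t"
    unfolding A_def D_def rate_fn_slope_def e2 by (simp add: field_simps)
  show ?thesis using dc unfolding feq num by (simp add: D_def power2_eq_square field_simps)
qed

lemma rate_fn_antimono:
  fixes \<mu> \<sigma> x0 c \<gamma> a b :: real
  assumes mu: "\<mu> > 0" and ab: "0 < a" "a \<le> b"
    and sgn: "\<And>t. a \<le> t \<Longrightarrow> t \<le> b \<Longrightarrow> (c * exp (\<gamma> * t) - x0 * exp (\<mu> * t)) * rate_fn_slope \<mu> x0 c \<gamma> t \<le> 0"
  shows "rate_fn \<mu> \<sigma> x0 c \<gamma> b \<le> rate_fn \<mu> \<sigma> x0 c \<gamma> a"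
proof (rule DERIV_nonpos_imp_nonincreasing[OF ab(2)])
  fix t assume t: "a \<le> t" "t \<le> b"
  let ?k = "2 * \<mu> / \<sigma>\<^sup>2 * exp (\<mu> * t) / (exp (2 * \<mu> * t) - 1)\<^sup>2"
  have "DERIV (rate_fn \<mu> \<sigma> x0 c \<gamma>) t :> ?k * ((c * exp (\<gamma> * t) - x0 * exp (\<mu> * t)) * rate_fn_slope \<mu> x0 c \<gamma> t)"
    by (rule rate_fn_has_derivative[OF mu]) (use ab t in simp)
  moreover have "?k * ((c * exp (\<gamma> * t) - x0 * exp (\<mu> * t)) * rate_fn_slope \<mu> x0 c \<gamma> t) \<le> 0"
    by (rule mult_nonneg_nonpos[OF _ sgn[OF t]]) (use mu in simp)
  ultimately show "\<exists>y. DERIV (rate_fn \<mu> \<sigma> x0 c \<gamma>) t :> y \<and> y \<le> 0" by blast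
qed

lemma rate_fn_mono:
  fixes \<mu> \<sigma> x0 c \<gamma> a b :: real
  assumes mu: "\<mu> > 0" and ab: "0 < a" "a \<le> b"
    and sgn: "\<And>t. a \<le> t \<Longrightarrow> t \<le> b \<Longrightarrow> (c * exp (\<gamma> * t) - x0 * exp (\<mu> * t)) * rate_fn_slope \<mu> x0 c \<gamma> t \<ge> 0"
  shows "rate_fn \<mu> \<sigma> x0 c \<gamma> a \<le> rate_fn \<mu> \<sigma> x0 c \<gamma> b"
proof (rule DERIV_nonneg_imp_nondecreasing[OF ab(2)])
  fix t assume t: "a \<le> t" "t \<le> b"
  let ?k = "2 * \<mu> / \<sigma>\<^sup>2 * exp (\<mu> * t) / (exp (2 * \<mu> * t) - 1)\<^sup>2"
  have "DERIV (rate_fn \<mu> \<sigma> x0 c \<gamma>) t :> ?k * ((c * exp (\<gamma> * t) - x0 * exp (\<mu> * t)) * rate_fn_slope \<mu> x0 c \<gamma> t)"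
    by (rule rate_fn_has_derivative[OF mu]) (use ab t in simp)
  moreover have "?k * ((c * exp (\<gamma> * t) - x0 * exp (\<mu> * t)) * rate_fn_slope \<mu> x0 c \<gamma> t) \<ge> 0"
    by (rule mult_nonneg_nonneg[OF _ sgn[OF t]]) (use mu in simp)
  ultimately show "\<exists>y. DERIV (rate_fn \<mu> \<sigma> x0 c \<gamma>) t :> y \<and> y \<ge> 0" by blast
qed

lemma phi_V_strict_mono:
  fixes \<mu> \<beta> :: real
  assumes mu: "\<mu> > 0" and b: "0 \<le> \<beta>" "\<beta> < \<mu>" and st: "0 \<le> s" "s < t"
  shows "phi_V \<mu> \<beta> s < phi_V \<mu> \<beta> t"
proof (rule DERIV_pos_imp_increasing[OF st(2)])
  fix x assume x: "s \<le> x" "x \<le> t"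
  let ?d = "(1 - \<beta>/\<mu>) * (exp ((\<mu> + \<beta>) * x) * (\<mu> + \<beta>)) + (\<beta>/\<mu>) * (exp ((\<beta> - \<mu>) * x) * (\<beta> - \<mu>))"
  have "DERIV (phi_V \<mu> \<beta>) x :> ?d"
    unfolding phi_V_def[abs_def] by (intro DERIV_add DERIV_cmult DERIV_fun_exp DERIV_cmult_Id)
  moreover have "?d > 0"
  proof -
    have x0: "x \<ge> 0" using x st by simp
    have "\<beta>/\<mu> \<le> 1" using mu b by simp
    then have c1: "0 \<le> (1 - \<beta>/\<mu>) * (\<mu> + \<beta>)" using mu b by (intro mult_nonneg_nonneg) auto
    have "(1 - \<beta>/\<mu>) * (\<mu> + \<beta>) * 1 \<le> (1 - \<beta>/\<mu>) * (\<mu> + \<beta>) * exp ((\<mu> + \<beta>) * x)"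
      using c1 mu b x0 by (intro mult_left_mono) auto
    moreover have "(\<beta>/\<mu>) * (\<beta> - \<mu>) * 1 \<le> (\<beta>/\<mu>) * (\<beta> - \<mu>) * exp ((\<beta> - \<mu>) * x)"
    proof (rule mult_left_mono_neg)
      show "exp ((\<beta> - \<mu>) * x) \<le> 1" using b x0 by (simp add: mult_nonpos_nonneg)
      have "0 \<le> \<beta> / \<mu>" using mu b by simp
      then show "\<beta> / \<mu> * (\<beta> - \<mu>) \<le> 0" using b by (intro mult_nonneg_nonpos) auto
    qed
    moreover have "(1 - \<beta>/\<mu>) * (\<mu> + \<beta>) + (\<beta>/\<mu>) * (\<beta> - \<mu>) = \<mu> - \<beta>"
      using mu by (simp add: field_simps power2_eq_square)
    ultimately have "\<mu> - \<beta> \<le> ?d" by (simp add: mult_ac)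
    then show ?thesis using b by simp
  qed
  ultimately show "\<exists>y. DERIV (phi_V \<mu> \<beta>) x :> y \<and> 0 < y" by blast
qed

lemma phi_V_mono:
  fixes \<mu> \<beta> :: real
  assumes "\<mu> > 0" "0 \<le> \<beta>" "\<beta> < \<mu>" "0 \<le> s" "s \<le> t"
  shows "phi_V \<mu> \<beta> s \<le> phi_V \<mu> \<beta> t"
  using phi_V_strict_mono[of \<mu> \<beta> s t] assms by (cases "s = t") auto

lemma continuous_on_phi_V: "continuous_on S (phi_V \<mu> \<beta>)"
  unfolding phi_V_def[abs_def] by (intro continuous_intros)

lemma phi_V_0: "phi_V \<mu> \<beta> 0 = 1" by (simp add: phi_V_def)

lemma phi_V_eq_unique:
  fixes \<mu> \<beta> v0 x0 :: real
  assumes mu: "\<mu> > 0" and b: "0 \<le> \<beta>" "\<beta> < \<mu>" and v: "0 < v0" "v0 < x0"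
  shows "\<exists>!t. t > 0 \<and> phi_V \<mu> \<beta> t = x0 / v0"
proof -
  define t1 where "t1 = (x0 / v0) / (\<mu> - \<beta>)"
  have t1: "t1 > 0" using v b by (simp add: t1_def)
  have "x0 / v0 \<le> phi_V \<mu> \<beta> t1"
  proof -
    have m1: "(1 - \<beta>/\<mu>) * \<mu> = \<mu> - \<beta>" using mu by (simp add: field_simps)
    have "(1 - \<beta>/\<mu>) * (\<mu> * t1) = (\<mu> - \<beta>) * t1" using m1 by (simp add: mult.assoc[symmetric])
    also have "\<dots> = x0 / v0" using b by (simp add: t1_def)
    finally have "x0 / v0 = (1 - \<beta>/\<mu>) * (\<mu> * t1)" by simp
    also have "\<dots> \<le> (1 - \<beta>/\<mu>) * (1 + (\<mu> + \<beta>) * t1)"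
      using mu b t1 by (intro mult_left_mono) (auto simp: field_simps)
    also have "\<dots> \<le> (1 - \<beta>/\<mu>) * exp ((\<mu> + \<beta>) * t1)"
      using mu b by (intro mult_left_mono) (auto simp: field_simps)
    also have "\<dots> \<le> phi_V \<mu> \<beta> t1" unfolding phi_V_def using mu b by simp
    finally show ?thesis .
  qed
  moreover have "phi_V \<mu> \<beta> 0 \<le> x0 / v0" using v by (simp add: phi_V_0)
  ultimately obtain t where t: "0 \<le> t" "t \<le> t1" "phi_V \<mu> \<beta> t = x0 / v0"
    using IVT'[of "phi_V \<mu> \<beta>" 0 "x0 / v0" t1] t1 continuous_on_phi_V by auto
  have "t \<noteq> 0" using t(3) v by (auto simp: phi_V_0)
  then have tp: "t > 0" using t by simp
  show ?thesis
  proof (rule ex1I[of _ t])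
    show "t > 0 \<and> phi_V \<mu> \<beta> t = x0 / v0" using tp t by simp
    fix s assume s: "s > 0 \<and> phi_V \<mu> \<beta> s = x0 / v0"
    show "s = t"
    proof (rule ccontr)
      assume "s \<noteq> t"
      then have "s < t \<or> t < s" by auto
      then show False using phi_V_strict_mono[OF mu b, of s t] phi_V_strict_mono[OF mu b, of t s] s t tp by auto
    qed
  qed
qed

lemma rate_fn_slope_phi_V: "\<mu> > 0 \<Longrightarrow> rate_fn_slope \<mu> x0 v0 \<beta> t = \<mu> * (x0 - v0 * phi_V \<mu> \<beta> t)"
proof -
  assume mu: "\<mu> > 0"
  have e1: "exp ((\<mu> + \<beta>) * t) = exp (\<beta> * t) * exp (\<mu> * t)" by (simp add: exp_add[symmetric] algebra_simps)
  have e2: "exp ((\<beta> - \<mu>) * t) = exp (\<beta> * t) / exp (\<mu> * t)" by (simp add: exp_diff[symmetric] algebra_simps)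
  show ?thesis unfolding rate_fn_slope_def phi_V_def e1 e2 using mu by (simp add: field_simps)
qed

lemma rate_fn_V_minimal:
  fixes \<mu> \<sigma> \<beta> v0 x0 T :: real
  assumes mu: "\<mu> > 0" and b: "0 \<le> \<beta>" "\<beta> < \<mu>" and v: "0 < v0" "v0 < x0"
    and to: "to > 0" "phi_V \<mu> \<beta> to = x0 / v0"
    and t: "t \<in> {0<..T}"
  shows "rate_fn \<mu> \<sigma> x0 v0 \<beta> (min T to) \<le> rate_fn \<mu> \<sigma> x0 v0 \<beta> t"
proof -
  have A: "v0 * exp (\<beta> * s) - x0 * exp (\<mu> * s) < 0" if "s \<ge> 0" for s
  proof -
    have "exp (\<beta> * s) \<le> exp (\<mu> * s)" using b that by (simp add: mult_right_mono)
    then have "v0 * exp (\<beta> * s) \<le> v0 * exp (\<mu> * s)" using v by simp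
    also have "\<dots> < x0 * exp (\<mu> * s)" using v by simp
    finally show ?thesis by simp
  qed
  show ?thesis
  proof (cases "t \<le> min T to")
    case True
    show ?thesis
    proof (rule rate_fn_antimono[OF mu])
      show "0 < t" "t \<le> min T to" using t True by auto
      fix s assume s: "t \<le> s" "s \<le> min T to"
      have "phi_V \<mu> \<beta> s \<le> phi_V \<mu> \<beta> to" using s t by (intro phi_V_mono[OF mu b]) auto
      then have "rate_fn_slope \<mu> x0 v0 \<beta> s \<ge> 0" unfolding rate_fn_slope_phi_V[OF mu] using mu v to
        by (simp add: field_simps)
      moreover have "v0 * exp (\<beta> * s) - x0 * exp (\<mu> * s) < 0" using A[of s] s t by simp
      ultimately show "(v0 * exp (\<beta> * s) - x0 * exp (\<mu> * s)) * rate_fn_slope \<mu> x0 v0 \<beta> s \<le> 0"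
        by (simp add: mult_nonpos_nonneg)
    qed
  next
    case False
    then have L: "min T to = to" "to < t" using t by (auto simp: min_def split: if_splits)
    show ?thesis unfolding L(1)
    proof (rule rate_fn_mono[OF mu to(1)])
      show "to \<le> t" using L by simp
      fix s assume s: "to \<le> s" "s \<le> t"
      have "phi_V \<mu> \<beta> to \<le> phi_V \<mu> \<beta> s" using s to by (intro phi_V_mono[OF mu b]) auto
      then have "rate_fn_slope \<mu> x0 v0 \<beta> s \<le> 0" unfolding rate_fn_slope_phi_V[OF mu] using mu v to
        by (simp add: field_simps mult_nonneg_nonpos)
      moreover have "v0 * exp (\<beta> * s) - x0 * exp (\<mu> * s) < 0" using A[of s] s to by simp
      ultimately show "(v0 * exp (\<beta> * s) - x0 * exp (\<mu> * s)) * rate_fn_slope \<mu> x0 v0 \<beta> s \<ge> 0"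
        by (simp add: mult_nonpos_nonpos)
    qed
  qed
qed

lemma phi_U_strict_antimono:
  fixes \<mu> \<alpha> :: real
  assumes mu: "\<mu> > 0" and a: "\<mu> < \<alpha>" and st: "0 \<le> s" "s < t"
  shows "phi_U \<mu> \<alpha> t < phi_U \<mu> \<alpha> s"
proof -
  have "(\<lambda>x. - phi_U \<mu> \<alpha> x) s < (\<lambda>x. - phi_U \<mu> \<alpha> x) t"
  proof (rule DERIV_pos_imp_increasing[OF st(2)])
    fix x assume x: "s \<le> x" "x \<le> t"
    let ?d = "- ((\<alpha>/\<mu>) * (exp ((\<alpha> - \<mu>) * x) * (\<alpha> - \<mu>)) - (\<alpha>/\<mu> - 1) * (exp ((\<mu> + \<alpha>) * x) * (\<mu> + \<alpha>)))"
    have "DERIV (\<lambda>x. - phi_U \<mu> \<alpha> x) x :> ?d"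
      unfolding phi_U_def by (intro DERIV_minus DERIV_diff DERIV_cmult DERIV_fun_exp DERIV_cmult_Id)
    moreover have "?d > 0"
    proof -
      have x0: "x \<ge> 0" using x st by simp
      define Ea where "Ea = exp ((\<alpha> - \<mu>) * x)"
      define Eb where "Eb = exp ((\<mu> + \<alpha>) * x)"
      define K1 where "K1 = (\<alpha>/\<mu>) * (\<alpha> - \<mu>)"
      define K2 where "K2 = (\<alpha>/\<mu> - 1) * (\<mu> + \<alpha>)"
      have deq: "?d = K2 * Eb - K1 * Ea" unfolding K1_def K2_def Ea_def[symmetric] Eb_def[symmetric]
        using mu by (simp add: field_simps)
      have c1: "0 \<le> K1" using mu a by (simp add: K1_def)
      have "Ea \<le> Eb" unfolding Ea_def Eb_def using mu x0 by (intro exp_mono mult_right_mono) auto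
      then have "K1 * Ea \<le> K1 * Eb" using c1 by (intro mult_left_mono) auto
      moreover have "K2 - K1 = \<alpha> - \<mu>" using mu by (simp add: K1_def K2_def field_simps power2_eq_square)
      moreover have "K2 * Eb - K1 * Eb = (K2 - K1) * Eb" by (simp add: algebra_simps)
      moreover have "(\<alpha> - \<mu>) * 1 \<le> (\<alpha> - \<mu>) * Eb" unfolding Eb_def using a mu x0 by (intro mult_left_mono) auto
      ultimately have "(\<alpha> - \<mu>) \<le> ?d" unfolding deq by simp
      then show ?thesis using a by simp
    qed
    ultimately show "\<exists>y. DERIV (\<lambda>x. - phi_U \<mu> \<alpha> x) x :> y \<and> 0 < y" by blast
  qed
  then show ?thesis by simp
qed

lemma phi_U_antimono:
  fixes \<mu> \<alpha> :: real
  assumes "\<mu> > 0" "\<mu> < \<alpha>" "0 \<le> s" "s \<le> t"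
  shows "phi_U \<mu> \<alpha> t \<le> phi_U \<mu> \<alpha> s"
  using phi_U_strict_antimono[of \<mu> \<alpha> s t] assms by (cases "s = t") auto

lemma continuous_on_phi_U: "continuous_on S (phi_U \<mu> \<alpha>)"
  unfolding phi_U_def[abs_def] by (intro continuous_intros)

lemma phi_U_0: "phi_U \<mu> \<alpha> 0 = 1" by (simp add: phi_U_def)

lemma phi_U_eq_unique:
  fixes \<mu> \<alpha> u0 x0 :: real
  assumes mu: "\<mu> > 0" and a: "\<mu> < \<alpha>" and u: "0 < x0" "x0 < u0"
  shows "\<exists>!t. t > 0 \<and> phi_U \<mu> \<alpha> t = x0 / u0"
proof -
  define t1 where "t1 = 1 / (2 * (\<alpha> - \<mu>))"
  have t1: "t1 > 0" using a by (simp add: t1_def)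
  have "phi_U \<mu> \<alpha> t1 \<le> x0 / u0"
  proof -
    have e: "exp ((\<mu> + \<alpha>) * t1) = exp ((\<alpha> - \<mu>) * t1) * exp (2 * \<mu> * t1)"
      by (simp add: exp_add[symmetric] algebra_simps)
    have "\<alpha> / (\<alpha> - \<mu>) = 1 + 2 * \<mu> * t1" using a by (simp add: t1_def field_simps)
    also have "\<dots> \<le> exp (2 * \<mu> * t1)" by (rule exp_ge_add_one_self)
    finally have g: "\<alpha> / (\<alpha> - \<mu>) \<le> exp (2 * \<mu> * t1)" .
    have c: "(\<alpha>/\<mu> - 1) * (\<alpha> / (\<alpha> - \<mu>)) = \<alpha> / \<mu>" using mu a by (simp add: field_simps)
    have nn: "0 \<le> \<alpha>/\<mu> - 1" using mu a by (simp add: field_simps)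
    have "(\<alpha>/\<mu> - 1) * (\<alpha> / (\<alpha> - \<mu>)) \<le> (\<alpha>/\<mu> - 1) * exp (2 * \<mu> * t1)"
      using g nn by (rule mult_left_mono)
    then have "\<alpha>/\<mu> \<le> (\<alpha>/\<mu> - 1) * exp (2 * \<mu> * t1)" using c by simp
    then have "\<alpha>/\<mu> - (\<alpha>/\<mu> - 1) * exp (2 * \<mu> * t1) \<le> 0" by simp
    then have "exp ((\<alpha> - \<mu>) * t1) * (\<alpha>/\<mu> - (\<alpha>/\<mu> - 1) * exp (2 * \<mu> * t1)) \<le> 0"
      by (simp add: mult_nonneg_nonpos)
    moreover have "phi_U \<mu> \<alpha> t1 = exp ((\<alpha> - \<mu>) * t1) * (\<alpha>/\<mu> - (\<alpha>/\<mu> - 1) * exp (2 * \<mu> * t1))"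
    proof -
      have "phi_U \<mu> \<alpha> t1 = (\<alpha>/\<mu>) * exp ((\<alpha> - \<mu>) * t1) - (\<alpha>/\<mu> - 1) * (exp ((\<alpha> - \<mu>) * t1) * exp (2 * \<mu> * t1))"
        by (simp only: phi_U_def e)
      then show ?thesis by (simp only: right_diff_distrib mult_ac)
    qed
    ultimately have "phi_U \<mu> \<alpha> t1 \<le> 0" by simp
    also have "0 \<le> x0 / u0" using u by simp
    finally show ?thesis .
  qed
  moreover have "x0 / u0 \<le> phi_U \<mu> \<alpha> 0" using u by (simp add: phi_U_0)
  ultimately obtain t where t: "0 \<le> t" "t \<le> t1" "phi_U \<mu> \<alpha> t = x0 / u0"
    using IVT2'[of "phi_U \<mu> \<alpha>" t1 "x0 / u0" 0] t1 continuous_on_phi_U by auto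
  have "t \<noteq> 0" using t(3) u by (auto simp: phi_U_0)
  then have tp: "t > 0" using t by simp
  show ?thesis
  proof (rule ex1I[of _ t])
    show "t > 0 \<and> phi_U \<mu> \<alpha> t = x0 / u0" using tp t by simp
    fix s assume s: "s > 0 \<and> phi_U \<mu> \<alpha> s = x0 / u0"
    show "s = t"
    proof (rule ccontr)
      assume "s \<noteq> t"
      then have "s < t \<or> t < s" by auto
      then show False using phi_U_strict_antimono[OF mu a, of s t] phi_U_strict_antimono[OF mu a, of t s] s t tp by auto
    qed
  qed
qed

lemma rate_fn_slope_phi_U: "\<mu> > 0 \<Longrightarrow> rate_fn_slope \<mu> x0 u0 \<alpha> t = \<mu> * (x0 - u0 * phi_U \<mu> \<alpha> t)"
proof -
  assume mu: "\<mu> > 0"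
  have e1: "exp ((\<mu> + \<alpha>) * t) = exp (\<alpha> * t) * exp (\<mu> * t)" by (simp add: exp_add[symmetric] algebra_simps)
  have e2: "exp ((\<alpha> - \<mu>) * t) = exp (\<alpha> * t) / exp (\<mu> * t)" by (simp add: exp_diff[symmetric] algebra_simps)
  show ?thesis unfolding rate_fn_slope_def phi_U_def e1 e2 using mu by (simp add: field_simps)
qed

lemma rate_fn_U_minimal:
  fixes \<mu> \<sigma> \<alpha> u0 x0 T :: real
  assumes mu: "\<mu> > 0" and a: "\<mu> < \<alpha>" and u: "0 < x0" "x0 < u0"
    and to: "to > 0" "phi_U \<mu> \<alpha> to = x0 / u0"
    and t: "t \<in> {0<..T}"
  shows "rate_fn \<mu> \<sigma> x0 u0 \<alpha> (min T to) \<le> rate_fn \<mu> \<sigma> x0 u0 \<alpha> t"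
proof -
  have A: "u0 * exp (\<alpha> * s) - x0 * exp (\<mu> * s) > 0" if "s \<ge> 0" for s
  proof -
    have "exp (\<mu> * s) \<le> exp (\<alpha> * s)" using a that by (simp add: mult_right_mono)
    then have "x0 * exp (\<mu> * s) \<le> x0 * exp (\<alpha> * s)" using u by simp
    also have "\<dots> < u0 * exp (\<alpha> * s)" using u by simp
    finally show ?thesis by simp
  qed
  show ?thesis
  proof (cases "t \<le> min T to")
    case True
    show ?thesis
    proof (rule rate_fn_antimono[OF mu])
      show "0 < t" "t \<le> min T to" using t True by auto
      fix s assume s: "t \<le> s" "s \<le> min T to"
      have "phi_U \<mu> \<alpha> to \<le> phi_U \<mu> \<alpha> s" using s t by (intro phi_U_antimono[OF mu a]) auto
      then have "rate_fn_slope \<mu> x0 u0 \<alpha> s \<le> 0" unfolding rate_fn_slope_phi_U[OF mu] using mu u to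
        by (simp add: field_simps mult_nonneg_nonpos)
      moreover have "u0 * exp (\<alpha> * s) - x0 * exp (\<mu> * s) > 0" using A[of s] s t by simp
      ultimately show "(u0 * exp (\<alpha> * s) - x0 * exp (\<mu> * s)) * rate_fn_slope \<mu> x0 u0 \<alpha> s \<le> 0"
        by (simp add: mult_nonneg_nonpos)
    qed
  next
    case False
    then have L: "min T to = to" "to < t" using t by (auto simp: min_def split: if_splits)
    show ?thesis unfolding L(1)
    proof (rule rate_fn_mono[OF mu to(1)])
      show "to \<le> t" using L by simp
      fix s assume s: "to \<le> s" "s \<le> t"
      have "phi_U \<mu> \<alpha> s \<le> phi_U \<mu> \<alpha> to" using s to by (intro phi_U_antimono[OF mu a]) auto
      then have "rate_fn_slope \<mu> x0 u0 \<alpha> s \<ge> 0" unfolding rate_fn_slope_phi_U[OF mu] using mu u to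
        by (simp add: field_simps)
      moreover have "u0 * exp (\<alpha> * s) - x0 * exp (\<mu> * s) > 0" using A[of s] s to by simp
      ultimately show "(u0 * exp (\<alpha> * s) - x0 * exp (\<mu> * s)) * rate_fn_slope \<mu> x0 u0 \<alpha> s \<ge> 0"
        by simp
    qed
  qed
qed

lemma rate_fn_minus: "rate_fn \<mu> \<sigma> (- x0) (- c) \<gamma> s = rate_fn \<mu> \<sigma> x0 c \<gamma> s"
  by (simp add: rate_fn_def power2_eq_square algebra_simps)

section \<open>Exponential barriers\<close>

lemma std_brownian_motion_uminus:
  assumes "std_brownian_motion M W"
  shows "std_brownian_motion M (\<lambda>t \<omega>. - W t \<omega>)"
proof -
  interpret brownian_motion M W by (rule brownian_motion.intro[OF assms])
  have "distributed M lborel (\<lambda>\<omega>. - W t \<omega> - - W s \<omega>) (normal_density 0 (sqrt (t - s)))"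
    if "0 \<le> s" "s < t" for s t
    using normal_density_affine[OF distributed_increment[OF that], of "-1" 0] that by simp
  moreover have "indep_vars (\<lambda>_. borel) (\<lambda>i \<omega>. - W (ts (Suc i)) \<omega> - - W (ts i) \<omega>) {..<n}"
    if "0 \<le> ts 0" "\<forall>i<n. ts i < ts (Suc i)" for ts :: "nat \<Rightarrow> real" and n
    using indep_vars_compose2[OF indep_increments, of ts n "\<lambda>_ y. - y" "\<lambda>_. borel"] that by simp
  ultimately show ?thesis unfolding std_brownian_motion_def
    using prob_space_axioms W_zero continuous_on_W by (auto intro: continuous_on_minus)
qed

lemma solves_linear_sde_uminus:
  assumes "solves_linear_sde M W \<mu> \<sigma> \<epsilon> x0 X"
  shows "solves_linear_sde M (\<lambda>t \<omega>. - W t \<omega>) \<mu> \<sigma> \<epsilon> (- x0) (\<lambda>t \<omega>. - X t \<omega>)"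
  using assms unfolding solves_linear_sde_def
  by (auto intro: continuous_on_minus simp: algebra_simps)

lemma continuous_on_barrier_gap:
  assumes "solves_linear_sde M W \<mu> \<sigma> \<epsilon> x0 X" "\<omega> \<in> space M"
  shows "continuous_on {0..T} (\<lambda>t. X t \<omega> - c * exp (\<gamma> * t))"
proof -
  have X: "continuous_on {0..} (\<lambda>t. X t \<omega>)" using assms by (simp add: solves_linear_sde_def)
  show ?thesis
    using continuous_on_subset[OF X, of "{0..T}"] by (auto intro!: continuous_intros)
qed

lemma exponential_barrier_crossing_ldp:
  assumes "std_brownian_motion M W" "\<mu> > 0" "\<sigma> > 0" "T > 0"
    and sol: "\<And>\<epsilon>. \<epsilon> > 0 \<Longrightarrow> solves_linear_sde M W \<mu> \<sigma> \<epsilon> x0 (X \<epsilon>)"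
    and below: "\<And>t. t \<in> {0..T} \<Longrightarrow> c * exp ((\<gamma> - \<mu>) * t) < x0"
    and L: "L \<in> {0<..T}"
    and Lmin: "\<And>t. t \<in> {0<..T} \<Longrightarrow> rate_fn \<mu> \<sigma> x0 c \<gamma> L \<le> rate_fn \<mu> \<sigma> x0 c \<gamma> t"
  shows "((\<lambda>\<epsilon>. \<epsilon> * ln (measure M {\<omega> \<in> space M. \<exists>t\<in>{0..T}. X \<epsilon> t \<omega> \<le> c * exp (\<gamma> * t)}))
           \<longlongrightarrow> - rate_fn \<mu> \<sigma> x0 c \<gamma> L) (at_right 0)"
proof -
  interpret barrier_crossing M W \<mu> \<sigma> x0 T "\<lambda>t. c * exp (\<gamma> * t)" X
  proof unfold_locales
    show "std_brownian_motion M W" "\<mu> > 0" "\<sigma> > 0" "T > 0" by fact+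
    show "continuous_on {0..T} (\<lambda>t. c * exp (\<gamma> * t))" by (intro continuous_intros)
    show "\<And>\<epsilon>. \<epsilon> > 0 \<Longrightarrow> solves_linear_sde M W \<mu> \<sigma> \<epsilon> x0 (X \<epsilon>)" by (rule sol)
    fix t assume "t \<in> {0..T}"
    have "exp (- \<mu> * t) * (c * exp (\<gamma> * t)) = c * exp ((\<gamma> - \<mu>) * t)"
      by (simp add: exp_add[symmetric] algebra_simps)
    then show "exp (- \<mu> * t) * (c * exp (\<gamma> * t)) < x0" using below[OF \<open>t \<in> {0..T}\<close>] by (simp only:)
  qed
  have rate_L: "rate L = rate_fn \<mu> \<sigma> x0 c \<gamma> L" by (rule rate_exponential_barrier) (use L in auto)
  have "rate L \<le> rate t" if "t \<in> {0<..T}" for t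
    using Lmin[OF that] rate_exponential_barrier[of c \<gamma> t] that unfolding rate_L by simp
  then have "((\<lambda>\<epsilon>. \<epsilon> * ln (prob (crossing \<epsilon>))) \<longlongrightarrow> - rate L) (at_right 0)" by (rule crossing_ldp[OF L])
  then show ?thesis unfolding rate_L crossing_def .
qed

lemma lower_barrier_ldp:
  assumes "std_brownian_motion M W" "\<mu> > 0" "\<sigma> > 0" "T > 0"
    and sol: "\<And>\<epsilon>. \<epsilon> > 0 \<Longrightarrow> solves_linear_sde M W \<mu> \<sigma> \<epsilon> x0 (X \<epsilon>)"
    and below: "\<And>t. t \<in> {0..T} \<Longrightarrow> c * exp ((\<gamma> - \<mu>) * t) < x0"
    and L: "L \<in> {0<..T}"
    and Lmin: "\<And>t. t \<in> {0<..T} \<Longrightarrow> rate_fn \<mu> \<sigma> x0 c \<gamma> L \<le> rate_fn \<mu> \<sigma> x0 c \<gamma> t"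
  shows "((\<lambda>\<epsilon>. \<epsilon> * ln (measure M {\<omega> \<in> space M. (INF t\<in>{0..T}. X \<epsilon> t \<omega> - c * exp (\<gamma> * t)) \<le> 0}))
           \<longlongrightarrow> - rate_fn \<mu> \<sigma> x0 c \<gamma> L) (at_right 0)"
proof -
  have eq: "{\<omega> \<in> space M. \<exists>t\<in>{0..T}. X \<epsilon> t \<omega> \<le> c * exp (\<gamma> * t)}
      = {\<omega> \<in> space M. (INF t\<in>{0..T}. X \<epsilon> t \<omega> - c * exp (\<gamma> * t)) \<le> 0}" if "\<epsilon> > 0" for \<epsilon>
  proof -
    have "(INF t\<in>{0..T}. X \<epsilon> t \<omega> - c * exp (\<gamma> * t)) \<le> 0
        \<longleftrightarrow> (\<exists>t\<in>{0..T}. X \<epsilon> t \<omega> - c * exp (\<gamma> * t) \<le> 0)" if "\<omega> \<in> space M" for \<omega>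
      by (rule continuous_INF_le_0_iff[OF continuous_on_barrier_gap[OF sol[OF \<open>\<epsilon> > 0\<close>] that]])
         (use \<open>T > 0\<close> in simp)
    then show ?thesis by auto
  qed
  have "eventually (\<lambda>\<epsilon>. \<epsilon> * ln (measure M {\<omega> \<in> space M. \<exists>t\<in>{0..T}. X \<epsilon> t \<omega> \<le> c * exp (\<gamma> * t)})
      = \<epsilon> * ln (measure M {\<omega> \<in> space M. (INF t\<in>{0..T}. X \<epsilon> t \<omega> - c * exp (\<gamma> * t)) \<le> 0})) (at_right 0)"
    using eventually_at_right_less[of 0] by (rule eventually_mono) (simp only: eq)
  with exponential_barrier_crossing_ldp[OF assms] show ?thesis by (rule Lim_transform_eventually)
qed

lemma upper_barrier_ldp:
  assumes BM: "std_brownian_motion M W" and "\<mu> > 0" "\<sigma> > 0" "T > 0"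
    and sol: "\<And>\<epsilon>. \<epsilon> > 0 \<Longrightarrow> solves_linear_sde M W \<mu> \<sigma> \<epsilon> x0 (X \<epsilon>)"
    and above: "\<And>t. t \<in> {0..T} \<Longrightarrow> x0 < c * exp ((\<gamma> - \<mu>) * t)"
    and L: "L \<in> {0<..T}"
    and Lmin: "\<And>t. t \<in> {0<..T} \<Longrightarrow> rate_fn \<mu> \<sigma> x0 c \<gamma> L \<le> rate_fn \<mu> \<sigma> x0 c \<gamma> t"
  shows "((\<lambda>\<epsilon>. \<epsilon> * ln (measure M {\<omega> \<in> space M. (SUP t\<in>{0..T}. X \<epsilon> t \<omega> - c * exp (\<gamma> * t)) \<ge> 0}))
           \<longlongrightarrow> - rate_fn \<mu> \<sigma> x0 c \<gamma> L) (at_right 0)"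
proof -
  have lim: "((\<lambda>\<epsilon>. \<epsilon> * ln (measure M {\<omega> \<in> space M. \<exists>t\<in>{0..T}. - X \<epsilon> t \<omega> \<le> - c * exp (\<gamma> * t)}))
           \<longlongrightarrow> - rate_fn \<mu> \<sigma> (- x0) (- c) \<gamma> L) (at_right 0)"
  proof (rule exponential_barrier_crossing_ldp[OF std_brownian_motion_uminus[OF BM] assms(2-4)
        solves_linear_sde_uminus[OF sol] _ L])
    show "- c * exp ((\<gamma> - \<mu>) * t) < - x0" if "t \<in> {0..T}" for t using above[OF that] by simp
    show "rate_fn \<mu> \<sigma> (- x0) (- c) \<gamma> L \<le> rate_fn \<mu> \<sigma> (- x0) (- c) \<gamma> t" if "t \<in> {0<..T}" for t
      using Lmin[OF that] by (simp only: rate_fn_minus)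
  qed
  have eq: "{\<omega> \<in> space M. \<exists>t\<in>{0..T}. - X \<epsilon> t \<omega> \<le> - c * exp (\<gamma> * t)}
      = {\<omega> \<in> space M. (SUP t\<in>{0..T}. X \<epsilon> t \<omega> - c * exp (\<gamma> * t)) \<ge> 0}" if "\<epsilon> > 0" for \<epsilon>
  proof -
    have "(SUP t\<in>{0..T}. X \<epsilon> t \<omega> - c * exp (\<gamma> * t)) \<ge> 0
        \<longleftrightarrow> (\<exists>t\<in>{0..T}. X \<epsilon> t \<omega> - c * exp (\<gamma> * t) \<ge> 0)" if "\<omega> \<in> space M" for \<omega>
      by (rule continuous_SUP_ge_0_iff[OF continuous_on_barrier_gap[OF sol[OF \<open>\<epsilon> > 0\<close>] that]])
         (use \<open>T > 0\<close> in simp)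
    then show ?thesis by auto
  qed
  have ev: "eventually (\<lambda>\<epsilon>.
      \<epsilon> * ln (measure M {\<omega> \<in> space M. \<exists>t\<in>{0..T}. - X \<epsilon> t \<omega> \<le> - c * exp (\<gamma> * t)})
      = \<epsilon> * ln (measure M {\<omega> \<in> space M. (SUP t\<in>{0..T}. X \<epsilon> t \<omega> - c * exp (\<gamma> * t)) \<ge> 0})) (at_right 0)"
    using eventually_at_right_less[of 0] by (rule eventually_mono) (simp only: eq)
  show ?thesis using Lim_transform_eventually[OF lim ev] by (simp only: rate_fn_minus)
qed

theorem theorem2:
  fixes M :: "'a measure" and W :: "real \<Rightarrow> 'a \<Rightarrow> real"
    and X :: "real \<Rightarrow> real \<Rightarrow> 'a \<Rightarrow> real"
    and \<mu> \<sigma> \<alpha> \<beta> v0 x0 u0 T :: real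
  assumes "\<mu> > 0" "\<sigma> > 0" "0 \<le> \<beta>" "\<beta> < \<mu>" "\<mu> < \<alpha>"
    and "0 < v0" "v0 < x0" "x0 < u0" "T > 0"
    and BM: "std_brownian_motion M W"
    and sol: "\<And>\<epsilon>. \<epsilon> > 0 \<Longrightarrow> solves_linear_sde M W \<mu> \<sigma> \<epsilon> x0 (X \<epsilon>)"
  defines "V \<equiv> (\<lambda>t. v0 * exp (\<beta> * t))"
    and "U \<equiv> (\<lambda>t. u0 * exp (\<alpha> * t))"
    and "toV \<equiv> (THE t. t > 0 \<and> phi_V \<mu> \<beta> t = x0 / v0)"
    and "toU \<equiv> (THE t. t > 0 \<and> phi_U \<mu> \<alpha> t = x0 / u0)"
  shows "((\<lambda>\<epsilon>. \<epsilon> * ln (measure M {\<omega> \<in> space M. (INF t\<in>{0..T}. X \<epsilon> t \<omega> - V t) \<le> 0}))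
            \<longlongrightarrow> - rate_fn \<mu> \<sigma> x0 v0 \<beta> (min T toV)) (at_right 0)
       \<and> ((\<lambda>\<epsilon>. \<epsilon> * ln (measure M {\<omega> \<in> space M. (SUP t\<in>{0..T}. X \<epsilon> t \<omega> - U t) \<ge> 0}))
            \<longlongrightarrow> - rate_fn \<mu> \<sigma> x0 u0 \<alpha> (min T toU)) (at_right 0)"
proof -
  have toV: "toV > 0" "phi_V \<mu> \<beta> toV = x0 / v0"
    using theI'[OF phi_V_eq_unique[of \<mu> \<beta> v0 x0]] assms unfolding toV_def by auto
  have toU: "toU > 0" "phi_U \<mu> \<alpha> toU = x0 / u0"
    using theI'[OF phi_U_eq_unique[of \<mu> \<alpha> x0 u0]] assms unfolding toU_def by auto
  have "v0 * exp ((\<beta> - \<mu>) * t) < x0" if "t \<in> {0..T}" for t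
  proof -
    have "exp ((\<beta> - \<mu>) * t) \<le> 1" using assms(4) that by (simp add: mult_nonpos_nonneg)
    then show ?thesis using assms(6,7) mult_left_le[of "exp ((\<beta> - \<mu>) * t)" v0] by linarith
  qed
  moreover have "x0 < u0 * exp ((\<alpha> - \<mu>) * t)" if "t \<in> {0..T}" for t
  proof -
    have "1 \<le> exp ((\<alpha> - \<mu>) * t)" using assms(5) that by simp
    then show ?thesis using assms(6-8) mult_left_mono[of 1 "exp ((\<alpha> - \<mu>) * t)" u0] by linarith
  qed
  ultimately show ?thesis
    unfolding V_def U_def using assms toV toU
    by (intro conjI lower_barrier_ldp[OF BM _ _ _ sol] upper_barrier_ldp[OF BM _ _ _ sol]
        rate_fn_V_minimal rate_fn_U_minimal) auto
qed

end
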